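(* Let $q\ge 3$, $s\in\mathbb{N}$, and let $Y_s=\{y_i\}_{i=1}^{2s}$ be any collection of points with $y_{2s}<\cdots<y_1<y_{2s}+2\pi=:y_0$. Then there exists a function $f\in\Delta^{(q)}(Y_s)\cap W^{q-1}$ such that $$nE_n^{(q)}(f,Y_s)\ge C(q,Y_s),\qquad n\in\mathbb{N},$$ where $C(q,Y_s)>0$ depends only on $q$ and $Y_s$.
   Context: A function $f\in C[a,b]$ is called $q$-monotone ($q\ge 2$) if $f\in C^{q-2}(a,b)$ and $f^{(q-2)}$ is convex on $(a,b)$. For $Y_s$ as in the claim, $\Delta^{(q)}(Y_s)$ denotes the set of continuous $2\pi$-periodic functions $f:\mathbb{R}\to\mathbb{R}$ such that $(-1)^{i-1}f$ is $q$-monotone on $[y_i,y_{i-1}]$ for each $1\le i\le 2s$. For $r\in\mathbb{N}$, $W^r$ denotes the class of $2\pi$-periodic functions $f$ with $f^{(r-1)}$ locally absolutely continuous on $\mathbb{R}$ and $\operatorname{ess\,sup}_{x\in\mathbb{R}}|f^{(r)}(x)|\le 2$. $\mathcal{T}_n$ is the space of real trigonometric polynomials of degree $\le n$. For a continuous $2\pi$-periodic $g$, $\|g\|=\max_{x\in\mathbb{R}}|g(x)|$, and $E_n^{(q)}(g,Y_s):=\inf_{T_n\in\mathcal{T}_n\cap\Delta^{(q)}(Y_s)}\|g-T_n\|$. *)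

theory Defs
  imports "HOL-Analysis.Analysis"
begin

definition deriv_chain :: "nat \<Rightarrow> (nat \<Rightarrow> real \<Rightarrow> real) \<Rightarrow> (real \<Rightarrow> real) \<Rightarrow> real set \<Rightarrow> bool" where
  "deriv_chain k g f I \<longleftrightarrow> g 0 = f \<and>
     (\<forall>j<k. \<forall>x\<in>I. (g j has_real_derivative g (Suc j) x) (at x))"

definition Ck_on :: "nat \<Rightarrow> (real \<Rightarrow> real) \<Rightarrow> real set \<Rightarrow> bool" where
  "Ck_on k f I \<longleftrightarrow> (\<exists>g. deriv_chain k g f I \<and> (\<forall>j\<le>k. continuous_on I (g j)))"

definition q_monotone :: "nat \<Rightarrow> (real \<Rightarrow> real) \<Rightarrow> real \<Rightarrow> real \<Rightarrow> bool" where
  "q_monotone q f a b \<longleftrightarrow> continuous_on {a..b} f \<and>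
     (\<exists>g. deriv_chain (q - 2) g f {a<..<b} \<and> (\<forall>j\<le>q-2. continuous_on {a<..<b} (g j))
          \<and> convex_on {a<..<b} (g (q - 2)))"

definition periodic2pi :: "(real \<Rightarrow> real) \<Rightarrow> bool" where
  "periodic2pi f \<longleftrightarrow> (\<forall>x. f (x + 2 * pi) = f x)"

text \<open>Delta^(q)(Y_s), with the points y 0 > y 1 > ... > y (2s).\<close>
definition Delta_q :: "nat \<Rightarrow> nat \<Rightarrow> (nat \<Rightarrow> real) \<Rightarrow> (real \<Rightarrow> real) set" where
  "Delta_q q s y = {f. continuous_on UNIV f \<and> periodic2pi f \<and>
     (\<forall>i. 1 \<le> i \<and> i \<le> 2 * s \<longrightarrow> q_monotone q (\<lambda>x. (-1) ^ (i - 1) * f x) (y i) (y (i - 1)))}"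

definition abs_cont_on :: "(real \<Rightarrow> real) \<Rightarrow> real \<Rightarrow> real \<Rightarrow> bool" where
  "abs_cont_on g a b \<longleftrightarrow> (\<forall>e>0. \<exists>d>0. \<forall>(m::nat) (u::nat\<Rightarrow>real) (v::nat\<Rightarrow>real).
      (\<forall>k<m. a \<le> u k \<and> u k < v k \<and> v k \<le> b) \<and> (\<forall>k l. k < l \<and> l < m \<longrightarrow> v k \<le> u l) \<and>
      (\<Sum>k<m. v k - u k) < d \<longrightarrow> (\<Sum>k<m. \<bar>g (v k) - g (u k)\<bar>) < e)"

definition loc_abs_cont :: "(real \<Rightarrow> real) \<Rightarrow> bool" where
  "loc_abs_cont g \<longleftrightarrow> (\<forall>a b. a \<le> b \<longrightarrow> abs_cont_on g a b)"

definition W_class :: "nat \<Rightarrow> (real \<Rightarrow> real) set" where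
  "W_class r = {f. periodic2pi f \<and>
     (\<exists>g. deriv_chain (r - 1) g f UNIV \<and> loc_abs_cont (g (r - 1)) \<and>
        (AE x in lborel. \<exists>D. (g (r - 1) has_real_derivative D) (at x) \<and> \<bar>D\<bar> \<le> 2))}"

definition trig_poly :: "nat \<Rightarrow> (real \<Rightarrow> real) \<Rightarrow> bool" where
  "trig_poly n T \<longleftrightarrow> (\<exists>a b :: nat \<Rightarrow> real. \<forall>x.
      T x = a 0 + (\<Sum>k=1..n. a k * cos (real k * x) + b k * sin (real k * x)))"

definition supnorm :: "(real \<Rightarrow> real) \<Rightarrow> real" where
  "supnorm g = (SUP x. \<bar>g x\<bar>)"

definition E_nq :: "nat \<Rightarrow> nat \<Rightarrow> nat \<Rightarrow> (nat \<Rightarrow> real) \<Rightarrow> (real \<Rightarrow> real) \<Rightarrow> real" where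
  "E_nq n q s y g = Inf {supnorm (\<lambda>x. g x - T x) | T. trig_poly n T \<and> T \<in> Delta_q q s y}"

end

theory Submission
  imports Defs
begin

text \<open>The extremal function \<open>f\<close> is a \<open>(q - 2)\<close>-fold periodic primitive of a continuous
  piecewise linear function \<open>F\<close> (a triangle over two adjacent arcs) which is affine on every
  arc, so \<open>f \<in> \<Delta>\<^sup>(\<^sup>q\<^sup>)(Y\<^sub>s) \<inter> W\<^sup>q\<^sup>-\<^sup>1\<close>.  For \<open>T \<in> \<T>\<^sub>n \<inter> \<Delta>\<^sup>(\<^sup>q\<^sup>)(Y\<^sub>s)\<close> the function \<open>w = T\<^sup>(\<^sup>q\<^sup>)\<close> has
  the sign of \<open>g x = \<Prod>\<^sub>k sin ((x - y\<^sub>k) / 2)\<close> on every arc and vanishes at the nodes.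
  Integration by parts gives \<open>\<integral> w g = \<plusminus>\<integral> (T - f) g\<^sup>(\<^sup>q\<^sup>)\<close>, since \<open>\<integral> F g'' = 0\<close>
  (\<open>F\<close> is affine on the arcs and \<open>g\<close> vanishes at the nodes), and for \<open>\<phi> x = - cos (x - y\<^sub>1)\<close>
  it gives \<open>\<integral> w \<phi> = \<kappa> \<plusminus> \<integral> (T - f) \<phi>\<^sup>(\<^sup>q\<^sup>)\<close> with \<open>\<kappa> = \<integral> F \<phi>'' > 0\<close>.  Near the nodes a
  Bernstein-type estimate bounds \<open>|w|\<close> by \<open>n\<^sup>2 |x - y\<^sub>j| \<integral> |w|\<close>, away from them \<open>|g|\<close> is bounded
  below; together \<open>\<integral> |w| \<lesssim> n \<integral> w g\<close>, hence \<open>\<kappa> \<lesssim> n \<parallel>f - T\<parallel>\<close>.\<close>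

section \<open>Trigonometric sums\<close>

type_synonym harmonics = "(real \<times> real \<times> real) list"

text \<open>A list of triples \<open>(\<omega>, A, c)\<close> represents the sum of the waves \<open>A cos (\<omega> x + c)\<close>;
  unlike trigonometric polynomials this class is closed under products of
  half-frequency factors such as \<open>sin ((x - y) / 2)\<close>.\<close>

fun trig_sum :: "harmonics \<Rightarrow> real \<Rightarrow> real" where
  "trig_sum [] x = 0"
| "trig_sum ((\<omega>, A, c) # hs) x = A * cos (\<omega> * x + c) + trig_sum hs x"

fun trig_sum_deriv :: "harmonics \<Rightarrow> harmonics" where
  "trig_sum_deriv [] = []"
| "trig_sum_deriv ((\<omega>, A, c) # hs) = (\<omega>, A * \<omega>, c + pi / 2) # trig_sum_deriv hs"

fun wave_mult :: "real \<times> real \<times> real \<Rightarrow> harmonics \<Rightarrow> harmonics" where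
  "wave_mult _ [] = []"
| "wave_mult (\<omega>, A, c) ((\<nu>, B, d) # ks) =
     (\<omega> + \<nu>, A * B / 2, c + d) # (\<omega> - \<nu>, A * B / 2, c - d) # wave_mult (\<omega>, A, c) ks"

definition trig_sum_mult :: "harmonics \<Rightarrow> harmonics \<Rightarrow> harmonics" where
  "trig_sum_mult hs ks = concat (map (\<lambda>h. wave_mult h ks) hs)"

definition int_freqs :: "nat \<Rightarrow> harmonics \<Rightarrow> bool" where
  "int_freqs n hs \<longleftrightarrow> (\<forall>(\<omega>, A, c) \<in> set hs. \<exists>k::int. \<omega> = of_int k \<and> \<bar>k\<bar> \<le> int n)"

lemma trig_sum_append: "trig_sum (hs @ ks) x = trig_sum hs x + trig_sum ks x"
  by (induction hs rule: trig_sum_deriv.induct) auto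

lemma trig_sum_concat: "trig_sum (concat hss) x = (\<Sum>hs\<leftarrow>hss. trig_sum hs x)"
  by (induction hss) (auto simp: trig_sum_append)

lemma trig_sum_wave_mult:
  "trig_sum (wave_mult (\<omega>, A, c) ks) x = A * cos (\<omega> * x + c) * trig_sum ks x"
proof (induction ks rule: trig_sum_deriv.induct)
  case (2 \<nu> B d ks)
  let ?a = "\<omega> * x + c" and ?b = "\<nu> * x + d"
  have "trig_sum (wave_mult (\<omega>, A, c) ((\<nu>, B, d) # ks)) x
      = A * B / 2 * cos (?a + ?b) + A * B / 2 * cos (?a - ?b) + trig_sum (wave_mult (\<omega>, A, c) ks) x"
    by (simp add: algebra_simps)
  also have "A * B / 2 * cos (a + b) + A * B / 2 * cos (a - b) = A * cos a * (B * cos b)" for a b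
    by (simp add: cos_add cos_diff algebra_simps)
  finally show ?case
    using 2 by (simp add: algebra_simps)
qed simp

lemma trig_sum_mult: "trig_sum (trig_sum_mult hs ks) x = trig_sum hs x * trig_sum ks x"
  unfolding trig_sum_mult_def
  by (induction hs rule: trig_sum_deriv.induct) (auto simp: trig_sum_append trig_sum_wave_mult algebra_simps)

lemma has_real_derivative_trig_sum:
  "(trig_sum hs has_real_derivative trig_sum (trig_sum_deriv hs) x) (at x)"
proof (induction hs rule: trig_sum_deriv.induct)
  case (2 \<omega> A c hs)
  have "cos (\<omega> * x + (c + pi / 2)) = - sin (\<omega> * x + c)"
    by (simp add: cos_add add.assoc[symmetric])
  with 2 show ?case
    by (auto intro!: derivative_eq_intros)
qed simp

lemma continuous_on_trig_sum: "continuous_on S (trig_sum hs)"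
  by (meson DERIV_isCont continuous_at_imp_continuous_on has_real_derivative_trig_sum)

lemma int_freqs_trig_sum_deriv_pow: "int_freqs n hs \<Longrightarrow> int_freqs n ((trig_sum_deriv ^^ j) hs)"
proof -
  have "map fst (trig_sum_deriv hs) = map fst hs" for hs
    by (induction hs rule: trig_sum_deriv.induct) auto
  then have "map fst ((trig_sum_deriv ^^ j) hs) = map fst hs"
    by (induction j) auto
  then have "fst ` set ((trig_sum_deriv ^^ j) hs) = fst ` set hs"
    by (metis list.set_map)
  then show "int_freqs n hs \<Longrightarrow> int_freqs n ((trig_sum_deriv ^^ j) hs)"
    unfolding int_freqs_def by (smt (verit, ccfv_threshold) case_prod_beta image_iff)
qed

lemma periodic2pi_trig_sum: "int_freqs n hs \<Longrightarrow> periodic2pi (trig_sum hs)"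
proof (induction hs rule: trig_sum_deriv.induct)
  case (2 \<omega> A c hs)
  then obtain k :: int where k: "\<omega> = of_int k"
    by (auto simp: int_freqs_def)
  have "\<omega> * (x + 2 * pi) + c = (\<omega> * x + c) + 2 * pi * of_int k" for x
    by (simp add: k algebra_simps)
  then have "cos (\<omega> * (x + 2 * pi) + c) = cos (\<omega> * x + c)" for x
    by (simp only: cos_add sin_int_2pin cos_int_2pin) simp
  with 2 show ?case
    by (auto simp: periodic2pi_def int_freqs_def)
qed (simp add: periodic2pi_def)

lemma trig_poly_imp_trig_sum:
  assumes "trig_poly n T"
  obtains hs where "int_freqs n hs" "T = trig_sum hs"
proof -
  obtain a b :: "nat \<Rightarrow> real"
    where T: "\<And>x. T x = a 0 + (\<Sum>k=1..n. a k * cos (real k * x) + b k * sin (real k * x))"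
    using assms unfolding trig_poly_def by blast
  define hs where
    "hs = (0, a 0, 0) # concat (map (\<lambda>k. [(real k, a k, 0), (real k, b k, - pi / 2)]) [1..<n+1])"
  have "int_freqs n hs"
    unfolding int_freqs_def hs_def
    by (force intro: exI[of _ 0] exI[of _ "int k" for k])
  moreover have "T x = trig_sum hs x" for x
  proof -
    have "cos (t - pi / 2) = sin t" for t :: real
      by (simp add: cos_diff)
    then have "trig_sum hs x = a 0 + (\<Sum>k\<leftarrow>[1..<n+1]. a k * cos (real k * x) + b k * sin (real k * x))"
      unfolding hs_def by (simp add: trig_sum_concat o_def)
    also have "\<dots> = T x"
      by (simp add: T interv_sum_list_conv_sum_set_nat atLeastLessThanSuc_atLeastAtMost del: upt_Suc)
    finally show ?thesis ..
  qed
  ultimately show thesis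
    using that by blast
qed

lemma has_integral_cos_int_period:
  fixes k :: int
  shows "((\<lambda>t. cos (of_int k * t + c)) has_integral (if k = 0 then 2 * pi * cos c else 0)) {a..a + 2 * pi}"
proof (cases "k = 0")
  case False
  have "((\<lambda>t. cos (of_int k * t + c)) has_integral
      sin (of_int k * (a + 2 * pi) + c) / of_int k - sin (of_int k * a + c) / of_int k) {a..a + 2 * pi}"
  proof (rule fundamental_theorem_of_calculus)
    show "((\<lambda>t. sin (of_int k * t + c) / of_int k) has_vector_derivative cos (of_int k * t + c))
        (at t within {a..a + 2 * pi})" for t
      using False unfolding has_real_derivative_iff_has_vector_derivative[symmetric]
      by (intro derivative_eq_intros) auto
  qed simp
  moreover have "of_int k * (a + 2 * pi) + c = (of_int k * a + c) + 2 * pi * of_int k"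
    by (simp add: algebra_simps)
  ultimately show ?thesis
    using False by (simp only: sin_add sin_int_2pin cos_int_2pin) simp
qed (use has_integral_const_real[of "cos c" a "a + 2 * pi"] in simp)

lemma has_integral_cos_mult_cos_int_period:
  fixes k m :: int
  shows "((\<lambda>t. cos (of_int k * t + c) * cos (of_int m * t + d)) has_integral
           pi * ((if k = m then cos (c - d) else 0) + (if k = - m then cos (c + d) else 0)))
         {a..a + 2 * pi}"
proof -
  have prod_to_sum: "cos p * cos r = (cos (p - r) + cos (p + r)) / 2" for p r :: real
    by (simp add: cos_add cos_diff)
  have "of_int k * t + c - (of_int m * t + d) = of_int (k - m) * t + (c - d)"
    "of_int k * t + c + (of_int m * t + d) = of_int (k + m) * t + (c + d)" for t
    by (simp_all add: algebra_simps)
  then have "(\<lambda>t. cos (of_int k * t + c) * cos (of_int m * t + d))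
      = (\<lambda>t. (cos (of_int (k - m) * t + (c - d)) + cos (of_int (k + m) * t + (c + d))) / 2)"
    by (simp only: prod_to_sum)
  then have "((\<lambda>t. cos (of_int k * t + c) * cos (of_int m * t + d))
      has_integral ((if k - m = 0 then 2 * pi * cos (c - d) else 0)
                    + (if k + m = 0 then 2 * pi * cos (c + d) else 0)) / 2) {a..a + 2 * pi}"
    by (simp only:) (intro has_integral_divide has_integral_add has_integral_cos_int_period)
  moreover have "((if k - m = 0 then 2 * pi * cos (c - d) else 0)
                    + (if k + m = 0 then 2 * pi * cos (c + d) else 0)) / 2
      = pi * ((if k = m then cos (c - d) else 0) + (if k = - m then cos (c + d) else 0))"
    by (auto simp: eq_neg_iff_add_eq_0 algebra_simps)
  ultimately show ?thesis
    by simp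
qed

definition dirichlet_kernel :: "nat \<Rightarrow> real \<Rightarrow> real" where
  "dirichlet_kernel n u = 1 + 2 * (\<Sum>m=1..n. cos (real m * u))"

lemma has_integral_cos_mult_dirichlet_kernel:
  fixes k :: int
  assumes "\<bar>k\<bar> \<le> int n"
  shows "((\<lambda>t. cos (of_int k * t + c) * dirichlet_kernel n (x - t)) has_integral
           2 * pi * cos (of_int k * x + c)) {a..a + 2 * pi}"
proof -
  define J where "J m = pi * ((if k = - int m then cos (c - real m * x) else 0)
                              + (if k = int m then cos (c + real m * x) else 0))" for m :: nat
  have "cos (real m * (x - t)) = cos (of_int (- int m) * t + real m * x)" for m t
    by (simp add: algebra_simps)
  then have "((\<lambda>t. cos (of_int k * t + c) * cos (real m * (x - t))) has_integral J m) {a..a + 2 * pi}"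
    for m
    using has_integral_cos_mult_cos_int_period[of k c "- int m" "real m * x" a]
    by (simp add: J_def)
  then have integral:
    "((\<lambda>t. cos (of_int k * t + c) + 2 * (\<Sum>m=1..n. cos (of_int k * t + c) * cos (real m * (x - t))))
      has_integral (if k = 0 then 2 * pi * cos c else 0) + 2 * (\<Sum>m=1..n. J m)) {a..a + 2 * pi}"
    by (intro has_integral_add has_integral_cos_int_period has_integral_mult_right has_integral_sum) auto
  have fun_eq: "(\<lambda>t. cos (of_int k * t + c) * dirichlet_kernel n (x - t))
      = (\<lambda>t. cos (of_int k * t + c) + 2 * (\<Sum>m=1..n. cos (of_int k * t + c) * cos (real m * (x - t))))"
    unfolding dirichlet_kernel_def by (simp add: fun_eq_iff distrib_left sum_distrib_left mult.left_commute)
  have "(\<Sum>m=1..n. J m) = (\<Sum>m=1..n. if m = nat \<bar>k\<bar> then pi * cos (of_int k * x + c) else 0)"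
    by (rule sum.cong) (auto simp: J_def algebra_simps)
  then have "(\<Sum>m=1..n. J m) = (if k = 0 then 0 else pi * cos (of_int k * x + c))"
    using assms by (cases "k = 0") (simp_all add: nat_le_iff)
  then have "(if k = 0 then 2 * pi * cos c else 0) + 2 * (\<Sum>m=1..n. J m) = 2 * pi * cos (of_int k * x + c)"
    by simp
  with integral show ?thesis
    unfolding fun_eq by simp
qed

lemma has_integral_trig_sum_dirichlet_kernel:
  assumes "int_freqs n hs"
  shows "((\<lambda>t. trig_sum hs t * dirichlet_kernel n (x - t)) has_integral 2 * pi * trig_sum hs x)
           {a..a + 2 * pi}"
  using assms
proof (induction hs rule: trig_sum_deriv.induct)
  case (2 \<omega> A c hs)
  then obtain k :: int where k: "\<omega> = of_int k" "\<bar>k\<bar> \<le> int n"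
    by (auto simp: int_freqs_def)
  have "((\<lambda>t. A * (cos (of_int k * t + c) * dirichlet_kernel n (x - t))
               + trig_sum hs t * dirichlet_kernel n (x - t))
      has_integral A * (2 * pi * cos (of_int k * x + c)) + 2 * pi * trig_sum hs x) {a..a + 2 * pi}"
    using 2 k by (intro has_integral_add has_integral_mult_right has_integral_cos_mult_dirichlet_kernel)
      (auto simp: int_freqs_def)
  then show ?case
    by (simp add: k algebra_simps)
qed simp

lemma abs_cos_diff_le: "\<bar>cos a - cos b\<bar> \<le> \<bar>a - b\<bar>" for a b :: real
proof -
  have "\<bar>cos a - cos b\<bar> = 2 * \<bar>sin ((a + b) / 2)\<bar> * \<bar>sin ((b - a) / 2)\<bar>"
    by (simp add: cos_diff_cos abs_mult)
  also have "\<dots> \<le> 2 * 1 * \<bar>(b - a) / 2\<bar>"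
    by (intro mult_mono abs_sin_x_le_abs_x) auto
  finally show ?thesis
    by simp
qed

lemma dirichlet_kernel_lipschitz:
  "\<bar>dirichlet_kernel n u - dirichlet_kernel n v\<bar> \<le> real n * (real n + 1) * \<bar>u - v\<bar>"
proof -
  have "dirichlet_kernel n u - dirichlet_kernel n v = 2 * (\<Sum>m=1..n. cos (real m * u) - cos (real m * v))"
    by (simp add: dirichlet_kernel_def sum_subtractf algebra_simps)
  then have "\<bar>dirichlet_kernel n u - dirichlet_kernel n v\<bar>
      \<le> 2 * (\<Sum>m=1..n. \<bar>cos (real m * u) - cos (real m * v)\<bar>)"
    by (simp add: abs_mult)
  also have "\<dots> \<le> 2 * (\<Sum>m=1..n. real m * \<bar>u - v\<bar>)"
  proof (intro mult_left_mono sum_mono)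
    fix m
    have "\<bar>real m * u - real m * v\<bar> = real m * \<bar>u - v\<bar>"
      by (simp add: abs_mult flip: right_diff_distrib)
    then show "\<bar>cos (real m * u) - cos (real m * v)\<bar> \<le> real m * \<bar>u - v\<bar>"
      using abs_cos_diff_le[of "real m * u" "real m * v"] by simp
  qed simp
  also have "2 * (\<Sum>m=1..n. real m * \<bar>u - v\<bar>) = real n * (real n + 1) * \<bar>u - v\<bar>"
    by (induction n) (auto simp: algebra_simps)
  finally show ?thesis .
qed

text \<open>A Bernstein-type inequality: reproducing \<open>w\<close> by convolution with the Dirichlet kernel
  shows that a trigonometric polynomial of degree \<open>n\<close> is Lipschitz with constant
  \<open>O(n\<^sup>2)\<close> times its \<open>L\<^sup>1\<close> norm over a period.\<close>

lemma trig_sum_lipschitz_integral: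
  assumes "int_freqs n hs"
  shows "\<bar>trig_sum hs x - trig_sum hs z\<bar>
           \<le> real n * (real n + 1) * \<bar>x - z\<bar> / (2 * pi) * integral {a..a + 2 * pi} (\<lambda>t. \<bar>trig_sum hs t\<bar>)"
proof -
  let ?w = "trig_sum hs" and ?I = "{a..a + 2 * pi}" and ?L = "real n * (real n + 1) * \<bar>x - z\<bar>"
  let ?D = "\<lambda>t. ?w t * dirichlet_kernel n (x - t) - ?w t * dirichlet_kernel n (z - t)"
  have D: "(?D has_integral 2 * pi * ?w x - 2 * pi * ?w z) ?I"
    by (intro has_integral_diff has_integral_trig_sum_dirichlet_kernel assms)
  have "\<bar>?D t\<bar> \<le> ?L * \<bar>?w t\<bar>" for t
  proof -
    have "\<bar>?D t\<bar> = \<bar>?w t\<bar> * \<bar>dirichlet_kernel n (x - t) - dirichlet_kernel n (z - t)\<bar>"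
      by (simp add: abs_mult flip: right_diff_distrib)
    also have "\<dots> \<le> \<bar>?w t\<bar> * (real n * (real n + 1) * \<bar>(x - t) - (z - t)\<bar>)"
      by (intro mult_left_mono dirichlet_kernel_lipschitz) simp
    finally show ?thesis
      by (simp add: mult.commute)
  qed
  then have "norm (integral ?I ?D) \<le> integral ?I (\<lambda>t. ?L * \<bar>?w t\<bar>)"
    by (intro integral_norm_bound_integral has_integral_integrable[OF D] integrable_continuous_interval
        continuous_intros continuous_on_trig_sum) auto
  also have "\<dots> = ?L * integral ?I (\<lambda>t. \<bar>?w t\<bar>)"
    by simp
  finally have "2 * pi * \<bar>?w x - ?w z\<bar> \<le> ?L * integral ?I (\<lambda>t. \<bar>?w t\<bar>)"
    using D by (simp add: integral_unique abs_mult flip: right_diff_distrib)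
  then show ?thesis
    by (simp add: field_simps)
qed

section \<open>Periodic functions\<close>

lemma periodic2pi_add_int:
  assumes "periodic2pi h"
  shows "h (x + 2 * pi * of_int k) = h x"
proof -
  have nat: "h (x + 2 * pi * real n) = h x" for x n
  proof (induction n)
    case (Suc n)
    have "h (x + 2 * pi * real (Suc n)) = h ((x + 2 * pi * real n) + 2 * pi)"
      by (simp add: algebra_simps)
    also have "\<dots> = h x"
      using assms Suc.IH unfolding periodic2pi_def by simp
    finally show ?case .
  qed simp
  show ?thesis
  proof (cases "k \<ge> 0")
    case True
    then show ?thesis
      using nat[of x "nat k"] by simp
  next
    case False
    then show ?thesis
      using nat[of "x + 2 * pi * of_int k" "nat (- k)"] by simp
  qed
qed

lemma floor_period_bounds:
  fixes a x :: real
  defines "k \<equiv> \<lfloor>(x - a) / (2 * pi)\<rfloor>"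
  shows "a + 2 * pi * k \<le> x" "x < a + 2 * pi * (k + 1)"
proof -
  have "of_int k \<le> (x - a) / (2 * pi)" "(x - a) / (2 * pi) < of_int k + 1"
    unfolding k_def by linarith+
  then show "a + 2 * pi * k \<le> x" "x < a + 2 * pi * (k + 1)"
    using pi_gt_zero by (auto simp: field_simps)
qed

lemma period_decomposition:
  fixes a x :: real
  obtains k :: int where "a \<le> x - 2 * pi * of_int k" "x - 2 * pi * of_int k < a + 2 * pi"
proof -
  define k where "k = \<lfloor>(x - a) / (2 * pi)\<rfloor>"
  have "a + 2 * pi * k \<le> x" "x < a + 2 * pi * (k + 1)"
    unfolding k_def by (rule floor_period_bounds)+
  then show thesis
    by (intro that[of k]) (auto simp: algebra_simps)
qed

lemma periodic2pi_deriv: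
  assumes "periodic2pi h" "\<And>x. (h has_real_derivative h' x) (at x)"
  shows "periodic2pi h'"
  unfolding periodic2pi_def
proof
  fix x
  have "((\<lambda>u. h (u + 2 * pi)) has_real_derivative h' (x + 2 * pi)) (at x)"
  proof -
    have "((\<lambda>u. u + 2 * pi) has_real_derivative 1) (at x)"
      by (auto intro!: derivative_eq_intros)
    from DERIV_chain2[where f = h and g = "\<lambda>u. u + 2 * pi", OF assms(2)[of "x + 2 * pi"] this]
    show ?thesis
      by simp
  qed
  moreover have "(\<lambda>u. h (u + 2 * pi)) = h"
    using assms(1) by (auto simp: periodic2pi_def)
  ultimately show "h' (x + 2 * pi) = h' x"
    using assms(2) DERIV_unique by metis
qed

lemma abs_le_supnorm_periodic:
  assumes "continuous_on UNIV h" "periodic2pi h"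
  shows "\<bar>h x\<bar> \<le> supnorm h"
proof -
  have "compact (h ` {0..2 * pi})"
    by (intro compact_continuous_image continuous_on_subset[OF assms(1)]) auto
  then obtain M where "\<forall>v \<in> h ` {0..2 * pi}. norm v \<le> M"
    using compact_imp_bounded bounded_iff by metis
  then have M: "\<And>t. t \<in> {0..2 * pi} \<Longrightarrow> \<bar>h t\<bar> \<le> M"
    by auto
  have "\<bar>h x\<bar> \<le> M" for x
  proof -
    obtain k :: int where "0 \<le> x - 2 * pi * of_int k" "x - 2 * pi * of_int k < 0 + 2 * pi"
      by (rule period_decomposition)
    moreover have "h x = h (x - 2 * pi * of_int k)"
      using periodic2pi_add_int[OF assms(2), of "x - 2 * pi * of_int k" k] by simp
    ultimately show ?thesis
      using M by auto
  qed
  then have "bdd_above (range (\<lambda>x. \<bar>h x\<bar>))"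
    by (intro bdd_aboveI[of _ M]) auto
  then show ?thesis
    unfolding supnorm_def by (intro cSUP_upper) auto
qed

lemma supnorm_nonneg_periodic: "continuous_on UNIV h \<Longrightarrow> periodic2pi h \<Longrightarrow> 0 \<le> supnorm h"
  by (rule order_trans[OF abs_ge_zero abs_le_supnorm_periodic])

lemma abs_integral_mult_le:
  fixes u v :: "real \<Rightarrow> real"
  assumes "continuous_on UNIV u" "continuous_on UNIV v" "\<And>x. \<bar>u x\<bar> \<le> e"
  shows "\<bar>integral {a..b} (\<lambda>x. u x * v x)\<bar> \<le> e * integral {a..b} (\<lambda>x. \<bar>v x\<bar>)"
proof -
  have "norm (integral {a..b} (\<lambda>x. u x * v x)) \<le> integral {a..b} (\<lambda>x. e * \<bar>v x\<bar>)"
  proof (rule integral_norm_bound_integral)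
    have "continuous_on {a..b} (\<lambda>x. u x * v x)" "continuous_on {a..b} (\<lambda>x. e * \<bar>v x\<bar>)"
      using continuous_on_subset[OF assms(1)] continuous_on_subset[OF assms(2)]
      by (auto intro!: continuous_intros)
    then show "(\<lambda>x. u x * v x) integrable_on {a..b}" "(\<lambda>x. e * \<bar>v x\<bar>) integrable_on {a..b}"
      by (simp_all add: integrable_continuous_interval)
    show "norm (u x * v x) \<le> e * \<bar>v x\<bar>" for x
      using assms(3)[of x] by (simp add: abs_mult mult_right_mono)
  qed
  then show ?thesis
    by simp
qed

lemma integral_by_parts_periodic:
  assumes "\<And>x. (u has_real_derivative u' x) (at x)" "\<And>x. (v has_real_derivative v' x) (at x)"
    and "continuous_on UNIV u'" "continuous_on UNIV v'"
    and "periodic2pi u" "periodic2pi v"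
  shows "integral {a..a + 2 * pi} (\<lambda>x. u' x * v x) = - integral {a..a + 2 * pi} (\<lambda>x. u x * v' x)"
proof -
  let ?I = "{a..a + 2 * pi}"
  have "continuous_on UNIV u" "continuous_on UNIV v"
    using assms(1,2) by (meson DERIV_isCont continuous_at_imp_continuous_on)+
  then have int: "(\<lambda>x. u' x * v x) integrable_on ?I" "(\<lambda>x. u x * v' x) integrable_on ?I"
    using assms(3,4) by (auto intro!: integrable_continuous_interval continuous_intros
        intro: continuous_on_subset[of UNIV])
  have "((\<lambda>x. u' x * v x + u x * v' x) has_integral u (a + 2 * pi) * v (a + 2 * pi) - u a * v a) ?I"
  proof (rule fundamental_theorem_of_calculus)
    show "((\<lambda>x. u x * v x) has_vector_derivative u' x * v x + u x * v' x) (at x within ?I)" for x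
      unfolding has_real_derivative_iff_has_vector_derivative[symmetric]
      using DERIV_mult[OF assms(1,2)] by (auto intro: has_field_derivative_at_within simp: algebra_simps)
  qed simp
  moreover have "u (a + 2 * pi) * v (a + 2 * pi) - u a * v a = 0"
    using assms(5,6) by (simp add: periodic2pi_def)
  ultimately show ?thesis
    using int by (simp add: integral_unique integral_add[symmetric] eq_neg_iff_add_eq_0)
qed

lemma integral_by_parts_periodic_iterated:
  fixes U V :: "nat \<Rightarrow> real \<Rightarrow> real"
  assumes "\<And>j x. j < k \<Longrightarrow> (U j has_real_derivative U (Suc j) x) (at x)"
    and "\<And>j x. j < k \<Longrightarrow> (V j has_real_derivative V (Suc j) x) (at x)"
    and "\<And>j. j \<le> k \<Longrightarrow> continuous_on UNIV (U j)" "\<And>j. j \<le> k \<Longrightarrow> continuous_on UNIV (V j)"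
    and "\<And>j. j \<le> k \<Longrightarrow> periodic2pi (U j)" "\<And>j. j \<le> k \<Longrightarrow> periodic2pi (V j)"
  shows "integral {a..a + 2 * pi} (\<lambda>x. U 0 x * V k x)
           = (-1) ^ k * integral {a..a + 2 * pi} (\<lambda>x. U k x * V 0 x)"
  using assms
proof (induction k arbitrary: U)
  case (Suc k)
  have "integral {a..a + 2 * pi} (\<lambda>x. V (Suc k) x * U 0 x)
      = - integral {a..a + 2 * pi} (\<lambda>x. V k x * U 1 x)"
    by (rule integral_by_parts_periodic) (use Suc.prems in auto)
  moreover have "integral {a..a + 2 * pi} (\<lambda>x. U (Suc 0) x * V k x)
      = (-1) ^ k * integral {a..a + 2 * pi} (\<lambda>x. U (Suc k) x * V 0 x)"
    using Suc.IH[of "U \<circ> Suc"] Suc.prems by simp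
  ultimately show ?case
    by (simp add: mult.commute)
qed simp

lemma integral_affine_mult_second_deriv:
  assumes "a \<le> b" and affine: "\<And>x. a \<le> x \<Longrightarrow> x \<le> b \<Longrightarrow> h x = h a + c * (x - a)"
    and v: "\<And>x. (v has_real_derivative v1 x) (at x)" "\<And>x. (v1 has_real_derivative v2 x) (at x)"
  shows "integral {a..b} (\<lambda>x. h x * v2 x) = (h b * v1 b - h a * v1 a) - c * (v b - v a)"
proof -
  let ?F = "\<lambda>x. (h a + c * (x - a)) * v1 x - c * v x"
  have "((\<lambda>x. (h a + c * (x - a)) * v2 x) has_integral ?F b - ?F a) {a..b}"
  proof (rule fundamental_theorem_of_calculus[OF assms(1)])
    fix x
    have "((\<lambda>x. h a + c * (x - a)) has_real_derivative c) (at x)"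
      by (auto intro!: derivative_eq_intros)
    then have "(?F has_real_derivative c * v1 x + v2 x * (h a + c * (x - a)) - c * v1 x) (at x)"
      by (intro DERIV_diff DERIV_mult DERIV_cmult v)
    then have "(?F has_real_derivative (h a + c * (x - a)) * v2 x) (at x)"
      by (rule DERIV_cong) (simp add: algebra_simps)
    then show "(?F has_vector_derivative (h a + c * (x - a)) * v2 x) (at x within {a..b})"
      unfolding has_real_derivative_iff_has_vector_derivative[symmetric]
      by (rule has_field_derivative_at_within)
  qed
  moreover have "integral {a..b} (\<lambda>x. h x * v2 x) = integral {a..b} (\<lambda>x. (h a + c * (x - a)) * v2 x)"
  proof (rule integral_cong)
    fix x
    assume "x \<in> {a..b}"
    then have "h x = h a + c * (x - a)"
      by (intro affine) auto
    then show "h x * v2 x = (h a + c * (x - a)) * v2 x"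
      by simp
  qed
  ultimately have integral: "integral {a..b} (\<lambda>x. h x * v2 x) = ?F b - ?F a"
    by (simp add: integral_unique)
  have h_b: "h b = h a + c * (b - a)"
    using affine[of b] assms(1) by simp
  have "I = ((H + C * (b - a)) * W0 - C * V0) - ((H + C * (a - a)) * W1 - C * V1) \<Longrightarrow>
      I = ((H + C * (b - a)) * W0 - H * W1) - C * (V0 - V1)" for I H C W0 W1 V0 V1 :: real
    by (simp add: algebra_simps)
  from this[OF integral] show ?thesis
    unfolding h_b .
qed

lemma periodic2pi_trig_sum_deriv_pow:
  "periodic2pi (trig_sum hs) \<Longrightarrow> periodic2pi (trig_sum ((trig_sum_deriv ^^ j) hs))"
  by (induction j) (auto intro: periodic2pi_deriv has_real_derivative_trig_sum)

lemma integral_trig_sum_by_parts_pow: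
  assumes "periodic2pi (trig_sum hs)" "periodic2pi (trig_sum ks)"
  shows "integral {a..a + 2 * pi} (\<lambda>x. trig_sum hs x * trig_sum ((trig_sum_deriv ^^ q) ks) x)
           = (-1) ^ q * integral {a..a + 2 * pi} (\<lambda>x. trig_sum ((trig_sum_deriv ^^ q) hs) x * trig_sum ks x)"
  using integral_by_parts_periodic_iterated[of q "\<lambda>j. trig_sum ((trig_sum_deriv ^^ j) hs)"
      "\<lambda>j. trig_sum ((trig_sum_deriv ^^ j) ks)" a]
  by (simp add: has_real_derivative_trig_sum continuous_on_trig_sum periodic2pi_trig_sum_deriv_pow assms)

definition signed_integral :: "real \<Rightarrow> (real \<Rightarrow> real) \<Rightarrow> real \<Rightarrow> real" where
  "signed_integral a P x = (if a \<le> x then integral {a..x} P else - integral {x..a} P)"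

lemma signed_integral_combine:
  assumes "continuous_on UNIV P" "c \<le> x"
  shows "signed_integral a P x = signed_integral a P c + integral {c..x} P"
proof -
  have combine: "integral {u..v} P + integral {v..w} P = integral {u..w} P" if "u \<le> v" "v \<le> w" for u v w
    using that assms(1)
    by (intro Henstock_Kurzweil_Integration.integral_combine integrable_continuous_interval)
      (auto intro: continuous_on_subset)
  consider "a \<le> c" | "c < a" "a \<le> x" | "x < a"
    using assms(2) by linarith
  then show ?thesis
  proof cases
    case 1
    then show ?thesis
      using combine[of a c x] assms(2) by (simp add: signed_integral_def)
  next
    case 2
    then show ?thesis
      using combine[of c a x] by (simp add: signed_integral_def)
  next
    case 3
    then show ?thesis
      using combine[of c x a] assms(2) by (simp add: signed_integral_def)
  qed
qed

lemma has_real_derivative_signed_integral: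
  assumes "continuous_on UNIV P"
  shows "(signed_integral a P has_real_derivative P x) (at x)"
proof -
  have "((\<lambda>u. integral {x - 1..u} P) has_vector_derivative P x) (at x within {x - 1..x + 1})"
    by (rule integral_has_vector_derivative) (auto intro: continuous_on_subset[OF assms])
  then have "((\<lambda>u. integral {x - 1..u} P) has_real_derivative P x) (at x within {x - 1<..<x + 1})"
    unfolding has_real_derivative_iff_has_vector_derivative
    by (rule has_vector_derivative_within_subset) auto
  then have "((\<lambda>u. integral {x - 1..u} P) has_real_derivative P x) (at x)"
    by (subst (asm) at_within_open) auto
  then have "((\<lambda>u. signed_integral a P (x - 1) + integral {x - 1..u} P) has_real_derivative P x) (at x)"
    by (auto intro!: derivative_eq_intros)
  then show ?thesis
  proof (rule has_field_derivative_transform_within_open[where S = "{x - 1<..<x + 1}"])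
    show "signed_integral a P (x - 1) + integral {x - 1..u} P = signed_integral a P u"
      if "u \<in> {x - 1<..<x + 1}" for u
      using signed_integral_combine[OF assms, of "x - 1" u] that by simp
  qed auto
qed

lemma periodic_primitive:
  assumes "continuous_on UNIV P" "periodic2pi P" "integral {a..a + 2 * pi} P = 0"
  obtains Q where "\<And>x. (Q has_real_derivative P x) (at x)" "periodic2pi Q"
    "integral {a..a + 2 * pi} Q = 0"
proof -
  let ?S = "signed_integral a P"
  have dS: "(?S has_real_derivative P x) (at x)" for x
    by (rule has_real_derivative_signed_integral[OF assms(1)])
  have "((\<lambda>x. ?S (x + 2 * pi) - ?S x) has_real_derivative P (x + 2 * pi) * 1 - P x) (at x)" for x
    by (intro DERIV_diff dS DERIV_chain2[where f = ?S and g = "\<lambda>u. u + 2 * pi", OF dS])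
      (auto intro!: derivative_eq_intros)
  then have "?S (x + 2 * pi) - ?S x = ?S (a + 2 * pi) - ?S a" for x
    using assms(2) by (intro DERIV_isconst_all[rule_format]) (simp add: periodic2pi_def)
  also have "?S (a + 2 * pi) - ?S a = 0"
    using assms(3) by (simp add: signed_integral_def)
  finally have per: "periodic2pi ?S"
    by (simp add: periodic2pi_def)
  define m where "m = integral {a..a + 2 * pi} ?S / (2 * pi)"
  show thesis
  proof
    show "((\<lambda>x. ?S x - m) has_real_derivative P x) (at x)" for x
      using dS by (auto intro!: derivative_eq_intros)
    show "periodic2pi (\<lambda>x. ?S x - m)"
      using per by (simp add: periodic2pi_def)
    have "continuous_on UNIV ?S"
      using dS by (meson DERIV_isCont continuous_at_imp_continuous_on)
    then show "integral {a..a + 2 * pi} (\<lambda>x. ?S x - m) = 0"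
      by (subst integral_diff) (auto simp: m_def intro: integrable_continuous_interval continuous_on_subset)
  qed
qed

definition periodic_deriv_chain :: "nat \<Rightarrow> (nat \<Rightarrow> real \<Rightarrow> real) \<Rightarrow> bool" where
  "periodic_deriv_chain k G \<longleftrightarrow>
     (\<forall>j<k. \<forall>x. (G j has_real_derivative G (Suc j) x) (at x))
     \<and> (\<forall>j\<le>k. continuous_on UNIV (G j) \<and> periodic2pi (G j))"

lemma periodic_primitive_chain:
  assumes "continuous_on UNIV F" "periodic2pi F" "integral {a..a + 2 * pi} F = 0"
  obtains G where "G k = F" "periodic_deriv_chain k G"
proof -
  have "\<exists>G. G k = F \<and> periodic_deriv_chain k G \<and> (\<forall>j\<le>k. integral {a..a + 2 * pi} (G j) = 0)"
  proof (induction k)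
    case 0
    show ?case
      using assms by (intro exI[of _ "\<lambda>_. F"]) (simp add: periodic_deriv_chain_def)
  next
    case (Suc k)
    then obtain G where G: "G k = F" "periodic_deriv_chain k G" "\<forall>j\<le>k. integral {a..a + 2 * pi} (G j) = 0"
      by blast
    then obtain Q where Q: "\<And>x. (Q has_real_derivative G 0 x) (at x)" "periodic2pi Q"
      "integral {a..a + 2 * pi} Q = 0"
      using periodic_primitive[of "G 0"] by (auto simp: periodic_deriv_chain_def)
    have "continuous_on UNIV Q"
      using Q(1) by (meson DERIV_isCont continuous_at_imp_continuous_on)
    with G Q show ?case
      by (intro exI[of _ "case_nat Q G"])
        (auto split: nat.split simp: less_Suc_eq_0_disj periodic_deriv_chain_def)
  qed
  then show thesis
    using that by blast
qed

lemma integral_chain_by_parts_pow: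
  assumes "q \<ge> 2" "periodic_deriv_chain (q - 2) G" "periodic2pi (trig_sum ks)"
  shows "integral {a..a + 2 * pi} (\<lambda>x. G 0 x * trig_sum ((trig_sum_deriv ^^ q) ks) x)
           = (-1) ^ q * integral {a..a + 2 * pi} (\<lambda>x. G (q - 2) x * trig_sum ((trig_sum_deriv ^^ 2) ks) x)"
proof -
  obtain m where m: "q = m + 2"
    using assms(1) by (metis le_add_diff_inverse2)
  have "integral {a..a + 2 * pi} (\<lambda>x. G 0 x * trig_sum ((trig_sum_deriv ^^ (m + 2)) ks) x)
      = (-1) ^ m * integral {a..a + 2 * pi} (\<lambda>x. G m x * trig_sum ((trig_sum_deriv ^^ (0 + 2)) ks) x)"
    using assms(2,3) periodic2pi_trig_sum_deriv_pow[OF assms(3), of "j + 2" for j] unfolding m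
    by (intro integral_by_parts_periodic_iterated[where V = "\<lambda>j. trig_sum ((trig_sum_deriv ^^ (j + 2)) ks)"])
      (auto simp: periodic_deriv_chain_def has_real_derivative_trig_sum continuous_on_trig_sum
        periodic2pi_trig_sum_deriv_pow)
  then show ?thesis
    by (simp add: m numeral_2_eq_2)
qed

definition periodic_extension :: "real \<Rightarrow> (real \<Rightarrow> real) \<Rightarrow> real \<Rightarrow> real" where
  "periodic_extension a h x = h (x - 2 * pi * of_int \<lfloor>(x - a) / (2 * pi)\<rfloor>)"

lemma periodic2pi_periodic_extension: "periodic2pi (periodic_extension a h)"
proof -
  have "(x + 2 * pi - a) / (2 * pi) = (x - a) / (2 * pi) + of_int 1" for x
    by (simp add: field_simps)
  then have "\<lfloor>(x + 2 * pi - a) / (2 * pi)\<rfloor> = \<lfloor>(x - a) / (2 * pi)\<rfloor> + 1" for x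
    by (metis floor_add_int)
  then show ?thesis
    by (simp add: periodic2pi_def periodic_extension_def algebra_simps)
qed

lemma periodic_extension_eq:
  fixes k :: int
  assumes "h (a + 2 * pi) = h a" "a + 2 * pi * k \<le> x" "x \<le> a + 2 * pi * (k + 1)"
  shows "periodic_extension a h x = h (x - 2 * pi * k)"
proof (cases "x = a + 2 * pi * (k + 1)")
  case True
  have "\<lfloor>(x - a) / (2 * pi)\<rfloor> = k + 1"
    by (rule floor_unique) (use True in auto)
  then show ?thesis
    using assms(1) True by (simp add: periodic_extension_def algebra_simps)
next
  case False
  have "\<lfloor>(x - a) / (2 * pi)\<rfloor> = k"
    by (rule floor_unique) (use assms(2,3) False in \<open>auto simp: field_simps\<close>)
  then show ?thesis
    by (simp add: periodic_extension_def)
qed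

lemma periodic_extension_lipschitz_cell:
  fixes k :: int
  assumes "h (a + 2 * pi) = h a" "L-lipschitz_on {a..a + 2 * pi} h"
    and "x \<in> {a + 2 * pi * of_int k..a + 2 * pi * (of_int k + 1)}"
    and "z \<in> {a + 2 * pi * of_int k..a + 2 * pi * (of_int k + 1)}"
  shows "\<bar>periodic_extension a h x - periodic_extension a h z\<bar> \<le> L * \<bar>x - z\<bar>"
proof -
  have "\<bar>h (x - 2 * pi * k) - h (z - 2 * pi * k)\<bar> \<le> L * dist (x - 2 * pi * k) (z - 2 * pi * k)"
    using lipschitz_onD[OF assms(2), of "x - 2 * pi * k" "z - 2 * pi * k"] assms(3,4)
    by (auto simp: dist_real_def algebra_simps)
  then show ?thesis
    using assms(3,4) periodic_extension_eq[OF assms(1), of k x] periodic_extension_eq[OF assms(1), of k z]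
    by (simp add: dist_real_def)
qed

text \<open>Points in different cells are compared through the cell boundaries in between, where the
  extension takes the common value \<open>h a\<close>.\<close>

lemma lipschitz_on_periodic_extension:
  assumes "h (a + 2 * pi) = h a" "L-lipschitz_on {a..a + 2 * pi} h"
  shows "L-lipschitz_on UNIV (periodic_extension a h)"
proof (rule lipschitz_onI)
  let ?H = "periodic_extension a h" and ?cell = "\<lambda>k::int. {a + 2 * pi * k..a + 2 * pi * (k + 1)}"
  note same_cell = periodic_extension_lipschitz_cell[OF assms]
  have "L \<ge> 0"
    using assms(2) by (rule lipschitz_on_nonneg)
  have ordered: "\<bar>?H x - ?H z\<bar> \<le> L * (z - x)" if "x \<le> z" for x z
  proof -
    define kx kz where "kx = \<lfloor>(x - a) / (2 * pi)\<rfloor>" and "kz = \<lfloor>(z - a) / (2 * pi)\<rfloor>"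
    have "a + 2 * pi * kx \<le> x" "x < a + 2 * pi * (kx + 1)" "a + 2 * pi * kz \<le> z" "z < a + 2 * pi * (kz + 1)"
      unfolding kx_def kz_def by (rule floor_period_bounds)+
    then have x: "x \<in> ?cell kx" and z: "z \<in> ?cell kz"
      by auto
    have "kx \<le> kz"
      unfolding kx_def kz_def using that by (intro floor_mono divide_right_mono) auto
    show ?thesis
    proof (cases "kx = kz")
      case True
      then show ?thesis
        using same_cell[OF x, of z] z that by simp
    next
      case False
      define c1 c2 where "c1 = a + 2 * pi * (kx + 1)" and "c2 = a + 2 * pi * kz"
      have "c1 \<le> c2"
        using \<open>kx \<le> kz\<close> False by (simp add: c1_def c2_def)
      have "?H c1 = h (c1 - 2 * pi * kx)"
        by (rule periodic_extension_eq[OF assms(1)]) (auto simp: c1_def)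
      also have "c1 - 2 * pi * kx = a + 2 * pi"
        by (simp add: c1_def algebra_simps)
      finally have "?H c1 = h a"
        using assms(1) by simp
      moreover have "?H c2 = h a"
        using periodic_extension_eq[OF assms(1), of kz c2] assms(1) by (simp add: c2_def)
      ultimately have "\<bar>?H x - ?H z\<bar> \<le> \<bar>?H x - ?H c1\<bar> + \<bar>?H c2 - ?H z\<bar>"
        by linarith
      also have "\<dots> \<le> L * (c1 - x) + L * (z - c2)"
        using same_cell[OF x, of c1] same_cell[OF _ z, of c2] x z
        by (intro add_mono) (auto simp: c1_def c2_def)
      also have "\<dots> \<le> L * (z - x)"
        using \<open>c1 \<le> c2\<close> \<open>L \<ge> 0\<close> by (simp add: algebra_simps mult_left_mono)
      finally show ?thesis .
    qed
  qed
  show "dist (?H x) (?H z) \<le> L * dist x z" for x z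
    using ordered[of x z] ordered[of z x] by (cases "x \<le> z") (auto simp: dist_real_def abs_minus_commute)
  show "L \<ge> 0"
    by fact
qed

lemma lipschitz_imp_loc_abs_cont:
  assumes "L-lipschitz_on UNIV h"
  shows "loc_abs_cont h"
  unfolding loc_abs_cont_def abs_cont_on_def
proof (intro allI impI)
  fix a b e :: real
  assume "e > 0"
  have "L \<ge> 0"
    using assms by (rule lipschitz_on_nonneg)
  show "\<exists>d>0. \<forall>(m::nat) (u::nat\<Rightarrow>real) (v::nat\<Rightarrow>real). (\<forall>k<m. a \<le> u k \<and> u k < v k \<and> v k \<le> b) \<and>
      (\<forall>k l. k < l \<and> l < m \<longrightarrow> v k \<le> u l) \<and> (\<Sum>k<m. v k - u k) < d \<longrightarrow> (\<Sum>k<m. \<bar>h (v k) - h (u k)\<bar>) < e"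
  proof (intro exI[of _ "e / (L + 1)"] conjI allI impI)
    show "e / (L + 1) > 0"
      using \<open>e > 0\<close> \<open>L \<ge> 0\<close> by simp
    fix m :: nat and u v :: "nat \<Rightarrow> real"
    assume H: "(\<forall>k<m. a \<le> u k \<and> u k < v k \<and> v k \<le> b) \<and> (\<forall>k l. k < l \<and> l < m \<longrightarrow> v k \<le> u l)
      \<and> (\<Sum>k<m. v k - u k) < e / (L + 1)"
    have "\<bar>h (v k) - h (u k)\<bar> \<le> L * (v k - u k)" if "k < m" for k
    proof -
      have "u k < v k"
        using H that by auto
      then show ?thesis
        using lipschitz_onD[OF assms, of "v k" "u k"] by (simp add: dist_real_def)
    qed
    then have "(\<Sum>k<m. \<bar>h (v k) - h (u k)\<bar>) \<le> (\<Sum>k<m. L * (v k - u k))"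
      by (intro sum_mono) auto
    also have "\<dots> = L * (\<Sum>k<m. v k - u k)"
      by (simp add: sum_distrib_left)
    also have "\<dots> \<le> (L + 1) * (\<Sum>k<m. v k - u k)"
      using H by (intro mult_right_mono sum_nonneg) (auto simp: less_imp_le)
    also have "\<dots> < e"
      using H \<open>L \<ge> 0\<close> by (simp add: field_simps)
    finally show "(\<Sum>k<m. \<bar>h (v k) - h (u k)\<bar>) < e" .
  qed
qed

section \<open>Convexity and \<open>q\<close>-monotonicity\<close>

lemma convex_on_affine: "convex S \<Longrightarrow> convex_on S (\<lambda>x::real. a * x + b)"
  unfolding convex_on_def
proof (intro conjI ballI allI impI)
  fix x z u v :: real
  assume "u + v = 1"
  then have "u * b + v * b = b"
    by (metis distrib_right mult_1)
  then show "a * (u *\<^sub>R x + v *\<^sub>R z) + b \<le> u * (a * x + b) + v * (a * z + b)"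
    by (simp add: algebra_simps)
qed

lemma convex_on_deriv_mono:
  assumes "convex_on {l<..<r} h" "\<And>t. t \<in> {l<..<r} \<Longrightarrow> (h has_real_derivative h' t) (at t)"
    and "x \<in> {l<..<r}" "z \<in> {l<..<r}" "x < z"
  shows "h' x \<le> h' z"
proof -
  have tangent: "h v - h u \<ge> h' u * (v - u)" if "u \<in> {l<..<r}" "v \<in> {l<..<r}" for u v
  proof (rule convex_on_imp_above_tangent[OF assms(1)])
    show "connected {l<..<r}"
      by simp
    show "u \<in> interior {l<..<r}"
      using that(1) by (simp add: interior_open)
    show "(h has_field_derivative h' u) (at u within {l<..<r})"
      using assms(2)[OF that(1)] by (rule has_field_derivative_at_within)
  qed (use that in simp)
  have "h z - h x \<ge> h' x * (z - x)" "h x - h z \<ge> h' z * (x - z)"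
    using tangent assms(3,4) by blast+
  then have "h' x * (z - x) \<le> h' z * (z - x)"
    by (simp add: algebra_simps)
  with \<open>x < z\<close> show ?thesis
    by simp
qed

lemma convex_on_second_deriv_nonneg:
  assumes "convex_on {l<..<r} h" "\<And>t. t \<in> {l<..<r} \<Longrightarrow> (h has_real_derivative h' t) (at t)"
    and "(h' has_real_derivative d) (at x)" "x \<in> {l<..<r}"
  shows "d \<ge> 0"
proof (rule ccontr)
  assume "\<not> d \<ge> 0"
  then obtain e where "e > 0" and e: "\<And>t. 0 < t \<Longrightarrow> t < e \<Longrightarrow> h' (x + t) < h' x"
    using DERIV_neg_dec_right[OF assms(3)] by (metis linorder_not_le)
  define t where "t = min e (r - x) / 2"
  have "0 < t" "t < e" "t < r - x"
    using \<open>e > 0\<close> assms(4) by (auto simp: t_def min_def)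
  moreover from this have "x + t \<in> {l<..<r}"
    using assms(4) by auto
  ultimately have "h' (x + t) < h' x" "h' x \<le> h' (x + t)"
    using e[of t] convex_on_deriv_mono[OF assms(1,2) assms(4), of "x + t"] by simp_all
  then show False
    by simp
qed

lemma q_monotone_imp_higher_deriv_nonneg:
  assumes "q \<ge> 2" "q_monotone q h a b" "H 0 = h"
    and "\<And>j x. j < q \<Longrightarrow> (H j has_real_derivative H (Suc j) x) (at x)"
    and "x \<in> {a<..<b}"
  shows "H q x \<ge> 0"
proof -
  obtain G where chain: "deriv_chain (q - 2) G h {a<..<b}" and convex: "convex_on {a<..<b} (G (q - 2))"
    using assms(2) unfolding q_monotone_def by blast
  have "G j z = H j z" if "j \<le> q - 2" "z \<in> {a<..<b}" for j z
    using that
  proof (induction j arbitrary: z)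
    case 0
    then show ?case
      using chain assms(3) by (simp add: deriv_chain_def)
  next
    case (Suc j)
    have "(G j has_real_derivative G (Suc j) z) (at z)"
      using chain Suc.prems by (simp add: deriv_chain_def)
    moreover have "(H j has_real_derivative H (Suc j) z) (at z)"
      using assms(4) Suc.prems by simp
    then have "(G j has_real_derivative H (Suc j) z) (at z)"
      by (rule has_field_derivative_transform_within_open[where S = "{a<..<b}"])
        (use Suc in simp_all)
    ultimately show ?case
      by (rule DERIV_unique)
  qed
  then have "\<And>z. z \<in> {a<..<b} \<Longrightarrow> G (q - 2) z = H (q - 2) z"
    by simp
  then have "convex_on {a<..<b} (H (q - 2))"
    using convex unfolding convex_on_def by (metis (no_types, lifting) convexD)
  moreover have "(H (q - 2) has_real_derivative H (q - 1) t) (at t)" for t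
    using assms(1) assms(4)[of "q - 2" t] by (simp add: Suc_diff_Suc numeral_2_eq_2)
  moreover have "(H (q - 1) has_real_derivative H q x) (at x)"
    using assms(1) assms(4)[of "q - 1" x] by simp
  ultimately show ?thesis
    using assms(5) by (rule convex_on_second_deriv_nonneg)
qed

lemma zero_in_Delta_q: "(\<lambda>x. 0) \<in> Delta_q q s y"
  unfolding Delta_q_def q_monotone_def deriv_chain_def periodic2pi_def
  by (auto intro!: exI[of _ "\<lambda>j x. 0"] simp: convex_on_const convex_real_interval)

lemma E_nq_lower_bound:
  assumes "n \<ge> 1" "\<And>T. trig_poly n T \<Longrightarrow> T \<in> Delta_q q s y \<Longrightarrow> c \<le> real n * supnorm (\<lambda>x. f x - T x)"
  shows "c \<le> real n * E_nq n q s y f"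
proof -
  let ?S = "{supnorm (\<lambda>x. f x - T x) | T. trig_poly n T \<and> T \<in> Delta_q q s y}"
  have "trig_poly n (\<lambda>x. 0)"
    unfolding trig_poly_def by (intro exI[of _ "\<lambda>k. 0"]) simp
  then have "?S \<noteq> {}"
    using zero_in_Delta_q by blast
  moreover have "c / real n \<le> v" if "v \<in> ?S" for v
    using that assms by (auto simp: divide_le_eq mult.commute)
  ultimately have "c / real n \<le> Inf ?S"
    by (rule cInf_greatest)
  then show ?thesis
    using assms(1) unfolding E_nq_def by (simp add: divide_le_eq mult.commute)
qed

lemma jordan_inequality:
  assumes "0 \<le> t" "t \<le> pi / 2"
  shows "2 * t / pi \<le> sin t"
proof -
  have "convex_on {0..pi / 2} (\<lambda>x. - sin x)"
    by (rule f''_ge0_imp_convex[where f' = "\<lambda>x. - cos x" and f'' = sin])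
      (auto intro!: derivative_eq_intros sin_ge_zero)
  then have "- sin ((1 - 2 * t / pi) *\<^sub>R 0 + (2 * t / pi) *\<^sub>R (pi / 2))
      \<le> (1 - 2 * t / pi) * - sin 0 + (2 * t / pi) * - sin (pi / 2)"
    using assms by (intro convex_onD) (auto simp: field_simps)
  then show ?thesis
    by simp
qed

lemma abs_sin_half_ge:
  assumes "\<bar>u\<bar> \<le> 2 * pi"
  shows "min \<bar>u\<bar> (2 * pi - \<bar>u\<bar>) / pi \<le> \<bar>sin (u / 2)\<bar>"
proof -
  have "\<bar>sin (u / 2)\<bar> = \<bar>sin (\<bar>u\<bar> / 2)\<bar>"
    by (cases "u \<ge> 0") simp_all
  also have "\<dots> = sin (\<bar>u\<bar> / 2)"
    using assms by (intro abs_of_nonneg sin_ge_zero) auto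
  finally have "\<bar>sin (u / 2)\<bar> = sin (\<bar>u\<bar> / 2)" .
  moreover have "min \<bar>u\<bar> (2 * pi - \<bar>u\<bar>) / pi \<le> sin (\<bar>u\<bar> / 2)"
  proof (cases "\<bar>u\<bar> \<le> pi")
    case True
    then show ?thesis
      using jordan_inequality[of "\<bar>u\<bar> / 2"] by (auto simp: min_def divide_right_mono)
  next
    case False
    have "sin (\<bar>u\<bar> / 2) = sin (pi - \<bar>u\<bar> / 2)"
      by simp
    then show ?thesis
      using False assms jordan_inequality[of "pi - \<bar>u\<bar> / 2"] by (auto simp: min_def field_simps)
  qed
  ultimately show ?thesis
    by simp
qed

lemma min_mult_min_ge:
  fixes a b d \<eta> :: real
  assumes "0 < \<eta>" "\<eta> \<le> d / 2" "\<eta> \<le> a" "\<eta> \<le> b" "d \<le> a + b"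
  shows "\<eta> * (d / 2) \<le> min a d * min b d"
proof -
  have "\<eta> \<le> min a d" "\<eta> \<le> min b d" "d / 2 \<le> min a d \<or> d / 2 \<le> min b d"
    using assms by auto
  then show ?thesis
  proof (elim conjE disjE)
    assume "d / 2 \<le> min a d"
    then have "d / 2 * \<eta> \<le> min a d * min b d"
      using \<open>\<eta> \<le> min b d\<close> assms(1,2) by (intro mult_mono) auto
    then show ?thesis
      by (simp add: mult.commute)
  next
    assume "d / 2 \<le> min b d"
    then show ?thesis
      using \<open>\<eta> \<le> min a d\<close> assms(1,2) by (intro mult_mono) auto
  qed
qed

lemma abs_max_min_diff_le:
  fixes u v u' v' :: real
  shows "\<bar>max 0 (min u v) - max 0 (min u' v')\<bar> \<le> max \<bar>u - u'\<bar> \<bar>v - v'\<bar>"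
  by (simp add: max_def min_def abs_if) linarith?

section \<open>The nodes and the sine product\<close>

locale circle_partition =
  fixes s :: nat and y :: "nat \<Rightarrow> real"
  assumes s_pos: "s \<ge> 1"
    and y_decreasing: "\<forall>i<2 * s. y (Suc i) < y i"
    and y_period: "y 0 = y (2 * s) + 2 * pi"
begin

lemma y_antimono: "i \<le> j \<Longrightarrow> j \<le> 2 * s \<Longrightarrow> y j \<le> y i"
proof (induction j rule: dec_induct)
  case (step k)
  then show ?case
    using y_decreasing by (metis Suc_le_lessD order_less_imp_le order_trans)
qed simp

definition min_gap :: real where
  "min_gap = Min ((\<lambda>j. y (j - 1) - y j) ` {1..2 * s})"

lemma min_gap_le: "1 \<le> j \<Longrightarrow> j \<le> 2 * s \<Longrightarrow> min_gap \<le> y (j - 1) - y j"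
  unfolding min_gap_def by (intro Min_le) auto

lemma min_gap_pos: "min_gap > 0"
proof -
  have "y (j - 1) - y j > 0" if "j \<in> {1..2 * s}" for j
  proof -
    have "j - 1 < 2 * s" "Suc (j - 1) = j"
      using that by auto
    then show ?thesis
      using y_decreasing by fastforce
  qed
  then show ?thesis
    unfolding min_gap_def using s_pos by (subst Min_gr_iff) auto
qed

lemma min_gap_le_diff:
  assumes "i < j" "j \<le> 2 * s"
  shows "min_gap \<le> y i - y j"
proof -
  have "y (j - 1) \<le> y i"
    using assms by (intro y_antimono) auto
  moreover have "min_gap \<le> y (j - 1) - y j"
    using assms by (intro min_gap_le) auto
  ultimately show ?thesis
    by linarith
qed

lemma y_strict: "i < j \<Longrightarrow> j \<le> 2 * s \<Longrightarrow> y j < y i"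
  using min_gap_le_diff min_gap_pos by fastforce

lemma arc_length_le:
  assumes "1 \<le> i" "i \<le> 2 * s"
  shows "y (i - 1) - y i \<le> 2 * pi - min_gap"
proof (cases "i = 1")
  case True
  then show ?thesis
    using min_gap_le_diff[of 1 "2 * s"] y_period s_pos by simp
next
  case False
  then have "min_gap \<le> y 0 - y (i - 1)"
    using assms by (intro min_gap_le_diff) auto
  moreover have "y (2 * s) \<le> y i"
    using assms by (intro y_antimono) auto
  ultimately show ?thesis
    using y_period by simp
qed

lemma closed_arc_cover:
  assumes "y (2 * s) \<le> x" "x \<le> y 0"
  obtains i where "1 \<le> i" "i \<le> 2 * s" "y i \<le> x" "x \<le> y (i - 1)"
proof -
  define i where "i = (LEAST i. y i \<le> x)"
  have "y i \<le> x" "i \<le> 2 * s"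
    unfolding i_def using assms(1) by (auto intro: LeastI Least_le)
  show thesis
  proof (cases "i = 0")
    case True
    with \<open>y i \<le> x\<close> assms s_pos y_antimono[of 0 1] show thesis
      by (intro that[of 1]) auto
  next
    case False
    then have "\<not> y (i - 1) \<le> x"
      using not_less_Least[of "i - 1" "\<lambda>i. y i \<le> x"] unfolding i_def by auto
    with False \<open>y i \<le> x\<close> \<open>i \<le> 2 * s\<close> show thesis
      by (intro that[of i]) auto
  qed
qed

lemma integral_sum_arcs:
  fixes h :: "real \<Rightarrow> real"
  assumes "continuous_on {y (2 * s)..y 0} h"
  shows "integral {y (2 * s)..y 0} h = (\<Sum>i=1..2 * s. integral {y i..y (i - 1)} h)"
proof -
  have "integral {y k..y 0} h = (\<Sum>i=1..k. integral {y i..y (i - 1)} h)" if "k \<le> 2 * s" for k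
    using that
  proof (induction k)
    case (Suc k)
    have "h integrable_on {y (Suc k)..y 0}"
      using Suc.prems y_antimono[of "Suc k" "2 * s"]
      by (intro integrable_continuous_interval continuous_on_subset[OF assms]) auto
    then have "integral {y (Suc k)..y k} h + integral {y k..y 0} h = integral {y (Suc k)..y 0} h"
      using Suc.prems by (intro Henstock_Kurzweil_Integration.integral_combine y_antimono) auto
    with Suc show ?case
      by simp
  qed simp
  then show ?thesis
    by simp
qed

definition sine_product :: "real \<Rightarrow> real" where
  "sine_product x = (\<Prod>k=1..2 * s. sin ((x - y k) / 2))"

definition sine_product_harmonics :: harmonics where
  "sine_product_harmonics =
     foldr (\<lambda>k hs. trig_sum_mult [(1 / 2, 1, - y k / 2 - pi / 2)] hs) [1..<2 * s + 1] [(0, 1, 0)]"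

lemma trig_sum_sine_product_harmonics: "trig_sum sine_product_harmonics = sine_product"
proof
  fix x
  have "cos (1 / 2 * x + (- y k / 2 - pi / 2)) = sin ((x - y k) / 2)" for k
  proof -
    have "cos (t - pi / 2) = sin t" for t
      by (simp add: cos_diff)
    moreover have "1 / 2 * x + (- y k / 2 - pi / 2) = (x - y k) / 2 - pi / 2"
      by (simp add: field_simps)
    ultimately show ?thesis
      by metis
  qed
  then have "trig_sum (foldr (\<lambda>k hs. trig_sum_mult [(1 / 2, 1, - y k / 2 - pi / 2)] hs) ks [(0, 1, 0)]) x
      = (\<Prod>k\<leftarrow>ks. sin ((x - y k) / 2))" for ks
    by (induction ks) (simp_all add: trig_sum_mult)
  also have "(\<Prod>k\<leftarrow>[1..<2 * s + 1]. sin ((x - y k) / 2)) = sine_product x"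
    unfolding sine_product_def
    by (subst prod.distinct_set_conv_list[symmetric]) (auto intro!: prod.cong)
  finally show "trig_sum sine_product_harmonics x = sine_product x"
    unfolding sine_product_harmonics_def .
qed

lemma continuous_on_sine_product: "continuous_on S sine_product"
  using continuous_on_trig_sum[of S sine_product_harmonics] by (simp add: trig_sum_sine_product_harmonics)

lemma periodic2pi_sine_product: "periodic2pi sine_product"
  unfolding periodic2pi_def
proof
  fix x
  have "sin ((x + 2 * pi - y k) / 2) = - sin ((x - y k) / 2)" for k
  proof -
    have "(x + 2 * pi - y k) / 2 = (x - y k) / 2 + pi"
      by (simp add: field_simps)
    then show ?thesis
      by (metis sin_periodic_pi)
  qed
  then show "sine_product (x + 2 * pi) = sine_product x"
    by (simp add: sine_product_def prod_uminus)
qed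

lemma sine_product_sign:
  assumes "1 \<le> i" "i \<le> 2 * s" "y i < x" "x < y (i - 1)"
  shows "(-1) ^ (i - 1) * sine_product x > 0"
proof -
  have arcs: "{1..2 * s} = {1..<i} \<union> {i..2 * s}"
    using assms by auto
  have "sine_product x = (\<Prod>k\<in>{1..<i}. sin ((x - y k) / 2)) * (\<Prod>k\<in>{i..2 * s}. sin ((x - y k) / 2))"
    unfolding sine_product_def arcs by (rule prod.union_disjoint) auto
  then have split: "(-1) ^ (i - 1) * sine_product x
      = (\<Prod>k\<in>{1..<i}. - sin ((x - y k) / 2)) * (\<Prod>k\<in>{i..2 * s}. sin ((x - y k) / 2))"
    by (simp add: prod_uminus)
  have "- sin ((x - y k) / 2) > 0" if "k \<in> {1..<i}" for k
  proof -
    have "y (i - 1) \<le> y k" "y k \<le> y 1" "y (2 * s) \<le> y i" "y 1 < y 0"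
      using that assms s_pos by (auto intro!: y_antimono y_strict)
    then have "0 < (y k - x) / 2" "(y k - x) / 2 < pi"
      using assms y_period by auto
    then have "sin ((y k - x) / 2) > 0"
      by (rule sin_gt_zero)
    moreover have "sin ((x - y k) / 2) = - sin ((y k - x) / 2)"
      by (metis minus_diff_eq minus_divide_left sin_minus)
    ultimately show ?thesis
      by simp
  qed
  moreover have "sin ((x - y k) / 2) > 0" if "k \<in> {i..2 * s}" for k
  proof -
    have "y k \<le> y i" "y (i - 1) \<le> y 0" "y (2 * s) \<le> y k"
      using that assms by (auto intro!: y_antimono)
    then have "0 < (x - y k) / 2" "(x - y k) / 2 < pi"
      using assms y_period by auto
    then show ?thesis
      by (rule sin_gt_zero)
  qed
  ultimately show ?thesis
    unfolding split by (intro mult_pos_pos prod_pos) auto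
qed

lemma sine_product_node: "j \<le> 2 * s \<Longrightarrow> sine_product (y j) = 0"
proof -
  have zero: "sine_product (y k) = 0" if "1 \<le> k" "k \<le> 2 * s" for k
    unfolding sine_product_def using that by (intro prod_zero bexI[of _ k]) auto
  have "sine_product (y 0) = sine_product (y (2 * s))"
    using periodic2pi_sine_product y_period by (simp add: periodic2pi_def)
  then show "j \<le> 2 * s \<Longrightarrow> sine_product (y j) = 0"
    using zero[of j] zero[of "2 * s"] s_pos by (cases "j = 0") auto
qed

definition sign_alternating :: "(real \<Rightarrow> real) \<Rightarrow> bool" where
  "sign_alternating w \<longleftrightarrow>
     (\<forall>i x. 1 \<le> i \<and> i \<le> 2 * s \<and> y i \<le> x \<and> x \<le> y (i - 1) \<longrightarrow> (-1) ^ (i - 1) * w x \<ge> 0)"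

lemma sign_alternatingI:
  assumes "continuous_on UNIV w"
    and "\<And>i x. 1 \<le> i \<Longrightarrow> i \<le> 2 * s \<Longrightarrow> y i < x \<Longrightarrow> x < y (i - 1) \<Longrightarrow> (-1) ^ (i - 1) * w x \<ge> 0"
  shows "sign_alternating w"
  unfolding sign_alternating_def
proof (intro allI impI)
  fix i x
  assume i: "1 \<le> i \<and> i \<le> 2 * s \<and> y i \<le> x \<and> x \<le> y (i - 1)"
  then have closure: "closure {y i<..<y (i - 1)} = {y i..y (i - 1)}"
    using y_strict[of "i - 1" i] by (intro closure_greaterThanLessThan) simp
  have "continuous_on (closure {y i<..<y (i - 1)}) (\<lambda>x. (-1) ^ (i - 1) * w x)"
    by (intro continuous_on_mult continuous_on_const continuous_on_subset[OF assms(1)]) simp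
  then show "(-1) ^ (i - 1) * w x \<ge> 0"
    by (rule continuous_ge_on_closure[where f = "\<lambda>x. (-1) ^ (i - 1) * w x"])
      (use closure i assms(2)[of i] in auto)
qed

lemma sign_alternating_sine_product: "sign_alternating sine_product"
proof (rule sign_alternatingI)
  show "continuous_on UNIV sine_product"
    using continuous_on_trig_sum[of UNIV sine_product_harmonics]
    by (simp add: trig_sum_sine_product_harmonics)
qed (use sine_product_sign in \<open>simp add: less_imp_le\<close>)

lemma sign_alternating_node_zero:
  assumes "sign_alternating w" "periodic2pi w" "j \<le> 2 * s"
  shows "w (y j) = 0"
proof -
  have sign: "(-1) ^ (i - 1) * w (y i) \<ge> 0" "(-1) ^ (i - 1) * w (y (i - 1)) \<ge> 0"
    if "1 \<le> i" "i \<le> 2 * s" for i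
    using assms(1) that y_strict[of "i - 1" i] unfolding sign_alternating_def by auto
  have "w (y 0) = w (y (2 * s))"
    using assms(2) y_period by (simp add: periodic2pi_def)
  moreover have "w (y 0) \<ge> 0" "- w (y (2 * s)) \<ge> 0"
    using sign[of 1] sign[of "2 * s"] s_pos by auto
  ultimately have ends: "w (y 0) = 0" "w (y (2 * s)) = 0"
    by linarith+
  show ?thesis
  proof (cases "j = 0 \<or> j = 2 * s")
    case False
    then have "0 < j" "j < 2 * s"
      using assms(3) by auto
    then obtain m where m: "j = Suc m" "Suc m < 2 * s"
      using gr0_implies_Suc by blast
    then have "(-1) ^ m * w (y j) \<ge> 0" "(-1) ^ Suc m * w (y j) \<ge> 0"
      using sign[of "Suc m"] sign[of "Suc (Suc m)"] by simp_all
    then show ?thesis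
      by simp
  qed (use ends in auto)
qed

lemma sign_alternating_mult_nonneg:
  assumes "sign_alternating v" "sign_alternating w" "y (2 * s) \<le> x" "x \<le> y 0"
  shows "v x * w x \<ge> 0"
proof -
  obtain i where i: "1 \<le> i" "i \<le> 2 * s" "y i \<le> x" "x \<le> y (i - 1)"
    using closed_arc_cover assms(3,4) by blast
  then have "0 \<le> (-1) ^ (i - 1) * v x" "0 \<le> (-1) ^ (i - 1) * w x"
    using assms(1,2) unfolding sign_alternating_def by blast+
  then have "0 \<le> ((-1) ^ (i - 1) * v x) * ((-1) ^ (i - 1) * w x)"
    by (rule mult_nonneg_nonneg)
  also have "\<dots> = v x * w x"
    by (simp add: algebra_simps flip: power_add)
  finally show ?thesis .
qed

lemma sign_alternating_trig_sum_deriv: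
  assumes "q \<ge> 2" "T \<in> Delta_q q s y" "T = trig_sum hs"
  shows "sign_alternating (trig_sum ((trig_sum_deriv ^^ q) hs))"
proof (rule sign_alternatingI[OF continuous_on_trig_sum])
  fix i x
  assume i: "1 \<le> i" "i \<le> 2 * s" and x: "y i < x" "x < y (i - 1)"
  let ?c = "(-1) ^ (i - 1) :: real"
  have "q_monotone q (\<lambda>x. ?c * T x) (y i) (y (i - 1))"
    using assms(2) i unfolding Delta_q_def by auto
  moreover have "((\<lambda>x. ?c * trig_sum ((trig_sum_deriv ^^ j) hs) x) has_real_derivative
      ?c * trig_sum ((trig_sum_deriv ^^ Suc j) hs) z) (at z)" for j z
    using has_real_derivative_trig_sum[of "(trig_sum_deriv ^^ j) hs" z] by (simp add: DERIV_cmult)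
  ultimately show "0 \<le> ?c * trig_sum ((trig_sum_deriv ^^ q) hs) x"
    using assms(1,3) x
    by (intro q_monotone_imp_higher_deriv_nonneg[where H = "\<lambda>j x. ?c * trig_sum ((trig_sum_deriv ^^ j) hs) x"])
      simp_all
qed

lemma abs_sine_factor_ge_left:
  assumes "1 \<le> i" "i \<le> 2 * s" "y i \<le> x" "x \<le> y (i - 1)"
  shows "min (x - y i) min_gap / pi \<le> \<bar>sin ((x - y i) / 2)\<bar>"
proof -
  have "x - y i \<le> 2 * pi - min_gap"
    using arc_length_le[OF assms(1,2)] assms(4) by simp
  then have "min (x - y i) min_gap \<le> min \<bar>x - y i\<bar> (2 * pi - \<bar>x - y i\<bar>)"
    using assms(3) by auto
  also have "\<dots> / pi \<le> \<bar>sin ((x - y i) / 2)\<bar>"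
    using \<open>x - y i \<le> 2 * pi - min_gap\<close> min_gap_pos assms(3) by (intro abs_sin_half_ge) simp
  finally show ?thesis
    by (simp add: divide_right_mono)
qed

lemma abs_sine_factor_ge_right:
  assumes "1 \<le> i" "i \<le> 2 * s" "y i \<le> x" "x \<le> y (i - 1)"
  shows "min (y (i - 1) - x) min_gap / pi \<le> \<bar>sin ((x - y (i - 1)) / 2)\<bar>"
proof -
  have "y (i - 1) - x \<le> 2 * pi - min_gap"
    using arc_length_le[OF assms(1,2)] assms(3) by simp
  then have "min (y (i - 1) - x) min_gap \<le> min \<bar>x - y (i - 1)\<bar> (2 * pi - \<bar>x - y (i - 1)\<bar>)"
    using assms(4) by auto
  also have "\<dots> / pi \<le> \<bar>sin ((x - y (i - 1)) / 2)\<bar>"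
    using \<open>y (i - 1) - x \<le> 2 * pi - min_gap\<close> min_gap_pos assms(4) by (intro abs_sin_half_ge) simp
  finally show ?thesis
    by (simp add: divide_right_mono)
qed

definition upper_node :: "nat \<Rightarrow> nat" where
  "upper_node i = (if i = 1 then 2 * s else i - 1)"

lemma upper_node: "1 \<le> i \<Longrightarrow> i \<le> 2 * s \<Longrightarrow> upper_node i \<in> {1..2 * s} - {i}"
  using s_pos by (auto simp: upper_node_def)

lemma abs_sine_factor_upper_node:
  "\<bar>sin ((x - y (upper_node i)) / 2)\<bar> = \<bar>sin ((x - y (i - 1)) / 2)\<bar>"
proof (cases "i = 1")
  case True
  have "(x - y (2 * s)) / 2 = (x - y 0) / 2 + pi"
    using y_period by (simp add: field_simps)
  then have "sin ((x - y (2 * s)) / 2) = - sin ((x - y 0) / 2)"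
    by (metis sin_periodic_pi)
  then show ?thesis
    using True by (simp add: upper_node_def)
qed (simp add: upper_node_def)

lemma abs_sine_factor_ge_far:
  assumes "1 \<le> i" "i \<le> 2 * s" "y i \<le> x" "x \<le> y (i - 1)"
    and "k \<in> {1..2 * s} - {i, upper_node i}"
  shows "min_gap / pi \<le> \<bar>sin ((x - y k) / 2)\<bar>"
proof -
  have k: "1 \<le> k" "k \<le> 2 * s" "k \<noteq> i" "k \<noteq> i - 1" "i = 1 \<Longrightarrow> k \<noteq> 2 * s"
    using assms(5) by (auto simp: upper_node_def split: if_splits)
  have far: "\<bar>x - y k\<bar> \<le> 2 * pi \<and> min_gap \<le> min \<bar>x - y k\<bar> (2 * pi - \<bar>x - y k\<bar>)"
  proof (cases "i < k")
    case True
    have "min_gap \<le> y i - y k" "y (i - 1) \<le> y 0" "y (2 * s) \<le> y k"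
      using True assms k by (auto intro: min_gap_le_diff y_antimono)
    moreover have "min_gap \<le> y (2 * s) + 2 * pi - y (i - 1) + (y k - y (2 * s))"
    proof (cases "i = 1")
      case True
      then show ?thesis
        using k min_gap_le_diff[of k "2 * s"] y_period by simp
    next
      case False
      then have "min_gap \<le> y 0 - y (i - 1)"
        using assms by (intro min_gap_le_diff) auto
      then show ?thesis
        using k y_antimono[of k "2 * s"] y_period by simp
    qed
    moreover have "0 \<le> x - y k"
      using calculation(1) assms(3) min_gap_pos by linarith
    ultimately show ?thesis
      using assms(3,4) y_period by (simp add: min_def)
  next
    case False
    then have "k < i - 1"
      using k by simp
    then have "min_gap \<le> y k - y (i - 1)" "min_gap \<le> y 0 - y 1" "y k \<le> y 1" "y (2 * s) \<le> y i"
      "y 1 \<le> y 0"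
      using assms k s_pos by (auto intro: min_gap_le_diff y_antimono)
    moreover have "x - y k \<le> 0"
      using calculation(1) assms(4) min_gap_pos by linarith
    ultimately show ?thesis
      using assms(3,4) y_period by (simp add: min_def)
  qed
  then have "min_gap / pi \<le> min \<bar>x - y k\<bar> (2 * pi - \<bar>x - y k\<bar>) / pi"
    by (simp add: divide_right_mono)
  also have "\<dots> \<le> \<bar>sin ((x - y k) / 2)\<bar>"
    using far by (intro abs_sin_half_ge) simp
  finally show ?thesis .
qed

lemma prod_far_sine_factors_ge:
  assumes "1 \<le> i" "i \<le> 2 * s" "y i \<le> x" "x \<le> y (i - 1)"
  shows "(min_gap / pi) ^ (2 * s - 2) \<le> (\<Prod>k\<in>{1..2 * s} - {i, upper_node i}. \<bar>sin ((x - y k) / 2)\<bar>)"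
proof -
  have "card ({1..2 * s} - {i, upper_node i}) = 2 * s - 2"
    using assms(1,2) upper_node[OF assms(1,2)] by (simp add: card_Diff_insert card_Diff_singleton_if)
  then have "(min_gap / pi) ^ (2 * s - 2) = (\<Prod>k\<in>{1..2 * s} - {i, upper_node i}. min_gap / pi)"
    by simp
  also have "\<dots> \<le> (\<Prod>k\<in>{1..2 * s} - {i, upper_node i}. \<bar>sin ((x - y k) / 2)\<bar>)"
    using min_gap_pos abs_sine_factor_ge_far[OF assms] by (intro prod_mono) auto
  finally show ?thesis .
qed

definition sine_product_const :: real where
  "sine_product_const = min_gap / (2 * pi\<^sup>2) * (min_gap / pi) ^ (2 * s - 2)"

lemma sine_product_const_pos: "sine_product_const > 0"
  using min_gap_pos by (simp add: sine_product_const_def)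

text \<open>Only the factors of the two endpoints of the arc can be small, and not both at once
  since the arc has length at least \<open>min_gap\<close>; this keeps the bound linear in \<open>\<eta>\<close>.\<close>

lemma sine_product_lower_bound:
  assumes "1 \<le> i" "i \<le> 2 * s" "0 < \<eta>" "\<eta> \<le> min_gap / 2"
    and "y i + \<eta> \<le> x" "x \<le> y (i - 1) - \<eta>"
  shows "sine_product_const * \<eta> \<le> \<bar>sine_product x\<bar>"
proof -
  let ?f = "\<lambda>k. \<bar>sin ((x - y k) / 2)\<bar>" and ?far = "{1..2 * s} - {i, upper_node i}"
  have x: "y i \<le> x" "x \<le> y (i - 1)"
    using assms by auto
  have "\<bar>sine_product x\<bar> = (\<Prod>k=1..2 * s. ?f k)"
    by (simp add: sine_product_def abs_prod)
  also have "\<dots> = ?f i * ?f (upper_node i) * (\<Prod>k\<in>?far. ?f k)"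
    using assms(1,2) upper_node[OF assms(1,2)]
    by (simp add: prod.remove[of _ i] prod.remove[of _ "upper_node i"] mult.assoc Diff_insert2[symmetric])
  finally have split: "\<bar>sine_product x\<bar> = ?f i * ?f (upper_node i) * (\<Prod>k\<in>?far. ?f k)" .
  have "min (x - y i) min_gap / pi * (min (y (i - 1) - x) min_gap / pi) \<le> ?f i * ?f (upper_node i)"
    using abs_sine_factor_ge_left[OF assms(1,2) x] abs_sine_factor_ge_right[OF assms(1,2) x]
      min_gap_pos assms(3,5,6) by (intro mult_mono) (auto simp: abs_sine_factor_upper_node)
  moreover have "\<eta> * min_gap / (2 * pi\<^sup>2) \<le> min (x - y i) min_gap / pi * (min (y (i - 1) - x) min_gap / pi)"
  proof -
    have "min_gap \<le> y (i - 1) - y i"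
      using assms(1,2) by (intro min_gap_le) auto
    then have "\<eta> * (min_gap / 2) \<le> min (x - y i) min_gap * min (y (i - 1) - x) min_gap"
      using assms(3-6) by (intro min_mult_min_ge) auto
    then show ?thesis
      by (simp add: field_simps power2_eq_square)
  qed
  ultimately have "\<eta> * min_gap / (2 * pi\<^sup>2) * (min_gap / pi) ^ (2 * s - 2)
      \<le> ?f i * ?f (upper_node i) * (\<Prod>k\<in>?far. ?f k)"
    using prod_far_sine_factors_ge[OF assms(1,2) x] assms(3) min_gap_pos by (intro mult_mono) auto
  then show ?thesis
    unfolding split sine_product_const_def by (simp add: algebra_simps)
qed

lemma integral_abs_le_weighted_inner:
  assumes i: "1 \<le> i" "i \<le> 2 * s" and \<eta>: "0 < \<eta>" "\<eta> \<le> min_gap / 2"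
    and w: "continuous_on UNIV w"
    and wg: "\<And>x. y i \<le> x \<Longrightarrow> x \<le> y (i - 1) \<Longrightarrow> 0 \<le> w x * sine_product x"
  shows "integral {y i + \<eta>..y (i - 1) - \<eta>} (\<lambda>x. \<bar>w x\<bar>)
           \<le> integral {y i..y (i - 1)} (\<lambda>x. w x * sine_product x) / (sine_product_const * \<eta>)"
proof -
  let ?a = "y i + \<eta>" and ?b = "y (i - 1) - \<eta>" and ?c = "sine_product_const * \<eta>"
  have c: "?c > 0"
    using sine_product_const_pos \<eta> by simp
  have "min_gap \<le> y (i - 1) - y i"
    using i by (intro min_gap_le) auto
  then have ord: "y i \<le> ?a" "?a \<le> ?b" "?b \<le> y (i - 1)"
    using \<eta> by auto
  have cont: "continuous_on {u..v} (\<lambda>x. \<bar>w x\<bar>)" "continuous_on {u..v} (\<lambda>x. w x * sine_product x / ?c)"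
    "continuous_on {u..v} (\<lambda>x. w x * sine_product x)" for u v
    using continuous_on_subset[OF w] continuous_on_sine_product c by (auto intro!: continuous_intros)
  have "integral {?a..?b} (\<lambda>x. \<bar>w x\<bar>) \<le> integral {?a..?b} (\<lambda>x. w x * sine_product x / ?c)"
  proof (rule integral_le[OF integrable_continuous_interval integrable_continuous_interval, OF cont(1,2)])
    fix x
    assume x: "x \<in> {?a..?b}"
    have "?c \<le> \<bar>sine_product x\<bar>"
      using x by (intro sine_product_lower_bound[OF i \<eta>]) auto
    then have "\<bar>w x\<bar> * ?c \<le> \<bar>w x\<bar> * \<bar>sine_product x\<bar>"
      by (intro mult_left_mono) auto
    also have "\<dots> = w x * sine_product x"
      using wg[of x] x ord by (simp add: abs_mult[symmetric])
    finally show "\<bar>w x\<bar> \<le> w x * sine_product x / ?c"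
      using c by (simp add: field_simps)
  qed
  also have "\<dots> = integral {?a..?b} (\<lambda>x. w x * sine_product x) / ?c"
    by simp
  also have "\<dots> \<le> integral {y i..y (i - 1)} (\<lambda>x. w x * sine_product x) / ?c"
    using ord wg c by (intro divide_right_mono integral_subset_le integrable_continuous_interval cont) auto
  finally show ?thesis .
qed

text \<open>Near the nodes the Bernstein-type bound applies, since the polynomials in question vanish
  there; away from the nodes \<open>sine_product\<close> is bounded below.\<close>

lemma arc_integral_abs_le:
  assumes i: "1 \<le> i" "i \<le> 2 * s" and \<eta>: "0 < \<eta>" "\<eta> \<le> min_gap / 2"
    and w: "continuous_on UNIV w" and L: "\<And>x j. j \<le> 2 * s \<Longrightarrow> \<bar>w x\<bar> \<le> L * \<bar>x - y j\<bar>"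
    and wg: "\<And>x. y i \<le> x \<Longrightarrow> x \<le> y (i - 1) \<Longrightarrow> 0 \<le> w x * sine_product x"
  shows "integral {y i..y (i - 1)} (\<lambda>x. \<bar>w x\<bar>)
           \<le> 2 * L * \<eta>\<^sup>2 + integral {y i..y (i - 1)} (\<lambda>x. w x * sine_product x) / (sine_product_const * \<eta>)"
proof -
  let ?a = "y i" and ?b = "y (i - 1)"
  have "min_gap \<le> ?b - ?a"
    using i by (intro min_gap_le) auto
  then have ord: "?a \<le> ?a + \<eta>" "?a + \<eta> \<le> ?b - \<eta>" "?b - \<eta> \<le> ?b"
    using \<eta> by auto
  have "\<bar>w (?a + 1)\<bar> \<le> L"
    using L[of i "?a + 1"] i by simp
  then have "L \<ge> 0"
    by (rule order_trans[OF abs_ge_zero])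
  have cont: "continuous_on {u..v} (\<lambda>x. \<bar>w x\<bar>)" for u v
    using continuous_on_subset[OF w] by (auto intro!: continuous_intros)
  have near_node: "integral {u..u + \<eta>} (\<lambda>x. \<bar>w x\<bar>) \<le> L * \<eta>\<^sup>2"
    if "\<And>x. x \<in> {u..u + \<eta>} \<Longrightarrow> \<bar>w x\<bar> \<le> L * \<eta>" for u
  proof -
    have "norm (integral {u..u + \<eta>} (\<lambda>x. \<bar>w x\<bar>)) \<le> L * \<eta> * (u + \<eta> - u)"
      using \<eta> that by (intro integral_bound cont) auto
    then show ?thesis
      by (simp add: power2_eq_square algebra_simps)
  qed
  have "integral {?a..?b} (\<lambda>x. \<bar>w x\<bar>) = integral {?a..?a + \<eta>} (\<lambda>x. \<bar>w x\<bar>)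
      + integral {?a + \<eta>..?b - \<eta>} (\<lambda>x. \<bar>w x\<bar>) + integral {?b - \<eta>..?b} (\<lambda>x. \<bar>w x\<bar>)"
    using ord integrable_continuous_interval[OF cont]
    by (simp add: Henstock_Kurzweil_Integration.integral_combine)
  moreover have "integral {?a..?a + \<eta>} (\<lambda>x. \<bar>w x\<bar>) \<le> L * \<eta>\<^sup>2"
    using \<open>L \<ge> 0\<close> \<eta> i by (intro near_node order.trans[OF L[of i]] mult_left_mono) auto
  moreover have "integral {?b - \<eta>..?b} (\<lambda>x. \<bar>w x\<bar>) \<le> L * \<eta>\<^sup>2"
    using near_node[of "?b - \<eta>"] \<open>L \<ge> 0\<close> \<eta> i
    by (force intro: order.trans[OF L[of "i - 1"]] mult_left_mono)
  moreover have "integral {?a + \<eta>..?b - \<eta>} (\<lambda>x. \<bar>w x\<bar>)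
      \<le> integral {?a..?b} (\<lambda>x. w x * sine_product x) / (sine_product_const * \<eta>)"
    by (rule integral_abs_le_weighted_inner[OF i \<eta> w wg])
  ultimately show ?thesis
    by linarith
qed

definition margin :: real where
  "margin = min (min_gap / 2) (1 / (4 * real s))"

lemma margin_bounds: "0 < margin" "margin \<le> min_gap / 2" "4 * real s * margin \<le> 1"
proof -
  show "0 < margin"
    using min_gap_pos s_pos by (simp add: margin_def)
  show "margin \<le> min_gap / 2"
    by (simp add: margin_def)
  have "margin \<le> 1 / (4 * real s)"
    by (simp add: margin_def)
  then show "4 * real s * margin \<le> 1"
    using s_pos by (simp add: field_simps)
qed

lemma abs_trig_sum_le_dist_node:
  assumes "int_freqs n hs" "sign_alternating (trig_sum hs)" "j \<le> 2 * s"
  shows "\<bar>trig_sum hs x\<bar>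
           \<le> real n * (real n + 1) / (2 * pi) * integral {y (2 * s)..y 0} (\<lambda>t. \<bar>trig_sum hs t\<bar>) * \<bar>x - y j\<bar>"
proof -
  have "trig_sum hs (y j) = 0"
    using assms(2) periodic2pi_trig_sum[OF assms(1)] assms(3) by (rule sign_alternating_node_zero)
  moreover have "\<bar>trig_sum hs x - trig_sum hs (y j)\<bar>
      \<le> real n * (real n + 1) * \<bar>x - y j\<bar> / (2 * pi) * integral {y (2 * s)..y 0} (\<lambda>t. \<bar>trig_sum hs t\<bar>)"
    using trig_sum_lipschitz_integral[OF assms(1), of x "y j" "y (2 * s)"] y_period by simp
  ultimately show ?thesis
    by (simp add: field_simps)
qed

lemma integral_abs_period_le:
  assumes \<eta>: "0 < \<eta>" "\<eta> \<le> min_gap / 2" and w: "continuous_on UNIV w"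
    and L: "\<And>x j. j \<le> 2 * s \<Longrightarrow> \<bar>w x\<bar> \<le> L * \<bar>x - y j\<bar>"
    and wg: "\<And>x. y (2 * s) \<le> x \<Longrightarrow> x \<le> y 0 \<Longrightarrow> 0 \<le> w x * sine_product x"
  shows "integral {y (2 * s)..y 0} (\<lambda>x. \<bar>w x\<bar>)
           \<le> 4 * real s * L * \<eta>\<^sup>2 + integral {y (2 * s)..y 0} (\<lambda>x. w x * sine_product x) / (sine_product_const * \<eta>)"
proof -
  have cont: "continuous_on {y (2 * s)..y 0} (\<lambda>x. \<bar>w x\<bar>)" "continuous_on {y (2 * s)..y 0} (\<lambda>x. w x * sine_product x)"
    using continuous_on_subset[OF w] continuous_on_sine_product by (auto intro!: continuous_intros)
  have "integral {y (2 * s)..y 0} (\<lambda>x. \<bar>w x\<bar>) = (\<Sum>i=1..2 * s. integral {y i..y (i - 1)} (\<lambda>x. \<bar>w x\<bar>))"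
    using cont(1) by (rule integral_sum_arcs)
  also have "\<dots> \<le> (\<Sum>i=1..2 * s. 2 * L * \<eta>\<^sup>2
      + integral {y i..y (i - 1)} (\<lambda>x. w x * sine_product x) / (sine_product_const * \<eta>))"
  proof (intro sum_mono arc_integral_abs_le[OF _ _ \<eta> w L wg])
    fix i x
    assume "i \<in> {1..2 * s}" "y i \<le> x" "x \<le> y (i - 1)"
    moreover from this have "y (2 * s) \<le> y i" "y (i - 1) \<le> y 0"
      by (auto intro: y_antimono)
    ultimately show "y (2 * s) \<le> x" "x \<le> y 0"
      by auto
  qed auto
  also have "\<dots> = 4 * real s * L * \<eta>\<^sup>2
      + integral {y (2 * s)..y 0} (\<lambda>x. w x * sine_product x) / (sine_product_const * \<eta>)"
    by (simp add: integral_sum_arcs[OF cont(2)] sum.distrib sum_divide_distrib)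
  finally show ?thesis .
qed

lemma integral_abs_le_weighted:
  assumes "n \<ge> 1" "int_freqs n hs" "sign_alternating (trig_sum hs)"
  shows "integral {y (2 * s)..y 0} (\<lambda>x. \<bar>trig_sum hs x\<bar>)
           \<le> 4 * real n / (sine_product_const * margin)
               * integral {y (2 * s)..y 0} (\<lambda>x. trig_sum hs x * sine_product x)"
proof -
  let ?w = "trig_sum hs" and ?J = "{y (2 * s)..y 0}"
  define I where "I = integral ?J (\<lambda>x. \<bar>?w x\<bar>)"
  define W where "W = integral ?J (\<lambda>x. ?w x * sine_product x)"
  define \<eta> where "\<eta> = margin / (real n + 1)"
  define L where "L = real n * (real n + 1) / (2 * pi) * I"
  have "0 < \<eta>" "\<eta> \<le> margin"
    using margin_bounds(1) by (auto simp: \<eta>_def field_simps)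
  then have \<eta>: "0 < \<eta>" "\<eta> \<le> min_gap / 2"
    using margin_bounds(2) by auto
  have "I \<ge> 0"
    unfolding I_def by (intro integral_nonneg integrable_continuous_interval continuous_intros continuous_on_trig_sum) auto
  have wg: "0 \<le> ?w x * sine_product x" if "y (2 * s) \<le> x" "x \<le> y 0" for x
    using sign_alternating_mult_nonneg[OF assms(3) sign_alternating_sine_product that] .
  have "I \<le> 4 * real s * L * \<eta>\<^sup>2 + W / (sine_product_const * \<eta>)"
    unfolding I_def W_def L_def
    by (intro integral_abs_period_le[OF \<eta> continuous_on_trig_sum] abs_trig_sum_le_dist_node assms wg)
  moreover have "4 * real s * L * \<eta>\<^sup>2 \<le> I / 2"
  proof -
    have "(real n + 1) * \<eta> = margin"
      by (simp add: \<eta>_def)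
    moreover have "real n * \<eta> \<le> margin"
      using \<eta> by (simp add: \<eta>_def field_simps)
    moreover have "4 * real s * L * \<eta>\<^sup>2 = (4 * real s * ((real n + 1) * \<eta>)) * (real n * \<eta>) * I / (2 * pi)"
      by (simp add: L_def power2_eq_square field_simps)
    ultimately have "4 * real s * L * \<eta>\<^sup>2 = (4 * real s * margin) * (real n * \<eta>) * I / (2 * pi)"
      by simp
    also have "\<dots> \<le> 1 * margin * I / (2 * pi)"
      using margin_bounds \<open>I \<ge> 0\<close> \<eta> \<open>real n * \<eta> \<le> margin\<close>
      by (intro divide_right_mono mult_right_mono mult_mono) auto
    also have "\<dots> \<le> I / 2"
    proof -
      have "1 * margin \<le> (4 * real s) * margin"
        using margin_bounds(1) s_pos by (intro mult_right_mono) auto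
      then have "margin \<le> pi"
        using margin_bounds(3) pi_ge_two by linarith
      then have "I * margin \<le> I * pi"
        using \<open>I \<ge> 0\<close> by (rule mult_left_mono)
      then show ?thesis
        using pi_gt_zero by (simp add: field_simps)
    qed
    finally show ?thesis .
  qed
  ultimately have "I \<le> 2 * (W / (sine_product_const * \<eta>))"
    by linarith
  also have "\<dots> = 2 * (real n + 1) / (sine_product_const * margin) * W"
    using sine_product_const_pos margin_bounds(1) by (simp add: \<eta>_def field_simps)
  also have "\<dots> \<le> 4 * real n / (sine_product_const * margin) * W"
    using assms(1) margin_bounds(1) sine_product_const_pos wg unfolding W_def
    by (intro mult_right_mono divide_right_mono integral_nonneg integrable_continuous_interval
        continuous_intros continuous_on_trig_sum continuous_on_sine_product) auto
  finally show ?thesis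
    by (simp add: I_def W_def)
qed

section \<open>The extremal function\<close>

lemma shifted_open_arc_cover:
  assumes "x \<notin> (\<Union>j\<le>2 * s. range (\<lambda>k::int. y j + 2 * pi * of_int k))"
  obtains i and k :: int where "1 \<le> i" "i \<le> 2 * s" "y i + 2 * pi * k < x" "x < y (i - 1) + 2 * pi * k"
proof -
  obtain k :: int where k: "y (2 * s) \<le> x - 2 * pi * k" "x - 2 * pi * k < y (2 * s) + 2 * pi"
    by (rule period_decomposition)
  have "x - 2 * pi * k \<le> y 0"
    using k(2) y_period by simp
  then obtain i where i: "1 \<le> i" "i \<le> 2 * s" "y i \<le> x - 2 * pi * k" "x - 2 * pi * k \<le> y (i - 1)"
    using closed_arc_cover[OF k(1)] by blast
  have off_nodes: "x - 2 * pi * k \<noteq> y j" if "j \<le> 2 * s" for j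
  proof
    assume "x - 2 * pi * k = y j"
    then have "x \<in> range (\<lambda>k::int. y j + 2 * pi * of_int k)"
      by (intro range_eqI[of _ _ k]) simp
    with assms that show False
      by blast
  qed
  have "i - 1 \<le> 2 * s"
    using i(2) by linarith
  then have "x - 2 * pi * k \<noteq> y i" "x - 2 * pi * k \<noteq> y (i - 1)"
    using off_nodes i(2) by blast+
  with i show thesis
    by (intro that[of i k]) auto
qed

lemma ae_deriv_bound_affine_on_arcs:
  assumes "periodic2pi h"
    and affine: "\<And>i x. 1 \<le> i \<Longrightarrow> i \<le> 2 * s \<Longrightarrow> y i \<le> x \<Longrightarrow> x \<le> y (i - 1) \<Longrightarrow> h x = h (y i) + c i * (x - y i)"
    and "\<And>i. \<bar>c i\<bar> \<le> B"
  shows "AE x in lborel. \<exists>D. (h has_real_derivative D) (at x) \<and> \<bar>D\<bar> \<le> B"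
proof (rule AE_I')
  let ?N = "\<Union>j\<le>2 * s. range (\<lambda>k::int. y j + 2 * pi * of_int k)"
  show "?N \<in> null_sets lborel"
    by (intro countable_imp_null_set_lborel) auto
  show "{x \<in> space lborel. \<not> (\<exists>D. (h has_real_derivative D) (at x) \<and> \<bar>D\<bar> \<le> B)} \<subseteq> ?N"
  proof (intro subsetI, rule ccontr)
    fix x
    assume x: "x \<in> {x \<in> space lborel. \<not> (\<exists>D. (h has_real_derivative D) (at x) \<and> \<bar>D\<bar> \<le> B)}" "x \<notin> ?N"
    obtain i and k :: int where i: "1 \<le> i" "i \<le> 2 * s" "y i + 2 * pi * k < x" "x < y (i - 1) + 2 * pi * k"
      using shifted_open_arc_cover[OF x(2)] by blast
    let ?S = "{y i + 2 * pi * k<..<y (i - 1) + 2 * pi * k}"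
    have eq: "h (y i) + c i * (z - 2 * pi * k - y i) = h z" if "z \<in> ?S" for z
    proof -
      have "h z = h (z - 2 * pi * k)"
        using periodic2pi_add_int[OF assms(1), of "z - 2 * pi * k" k] by simp
      also have "\<dots> = h (y i) + c i * (z - 2 * pi * k - y i)"
        using that by (intro affine[OF i(1,2)]) auto
      finally show ?thesis
        by simp
    qed
    have "((\<lambda>z. h (y i) + c i * (z - 2 * pi * k - y i)) has_real_derivative c i) (at x)"
      by (auto intro!: derivative_eq_intros)
    then have "(h has_real_derivative c i) (at x)"
      by (rule has_field_derivative_transform_within_open[of _ _ _ ?S]) (use i in \<open>auto intro: eq\<close>)
    with assms(3) x(1) show False
      by auto
  qed
qed

lemma integral_affine_on_arcs_mult_second_deriv:
  assumes "continuous_on UNIV h" "periodic2pi h"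
    and affine: "\<And>i x. 1 \<le> i \<Longrightarrow> i \<le> 2 * s \<Longrightarrow> y i \<le> x \<Longrightarrow> x \<le> y (i - 1) \<Longrightarrow> h x = h (y i) + c i * (x - y i)"
    and v: "\<And>x. (v has_real_derivative v1 x) (at x)" "\<And>x. (v1 has_real_derivative v2 x) (at x)"
    and "continuous_on UNIV v2" "periodic2pi v1"
  shows "integral {y (2 * s)..y 0} (\<lambda>x. h x * v2 x) = - (\<Sum>i=1..2 * s. c i * (v (y (i - 1)) - v (y i)))"
proof -
  let ?B = "\<lambda>j. h (y j) * v1 (y j)"
  have "integral {y (2 * s)..y 0} (\<lambda>x. h x * v2 x) = (\<Sum>i=1..2 * s. integral {y i..y (i - 1)} (\<lambda>x. h x * v2 x))"
    by (rule integral_sum_arcs[OF continuous_on_subset[OF continuous_on_mult[OF assms(1,6)]]]) simp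
  also have "\<dots> = (\<Sum>i=1..2 * s. (?B (i - 1) - ?B i) - c i * (v (y (i - 1)) - v (y i)))"
  proof (intro sum.cong refl integral_affine_mult_second_deriv[OF _ _ v])
    fix i x
    assume "i \<in> {1..2 * s}"
    then show "y i \<le> y (i - 1)" "y i \<le> x \<Longrightarrow> x \<le> y (i - 1) \<Longrightarrow> h x = h (y i) + c i * (x - y i)"
      by (auto intro: y_antimono affine)
  qed
  also have "\<dots> = (\<Sum>i=1..2 * s. ?B (i - 1) - ?B i) - (\<Sum>i=1..2 * s. c i * (v (y (i - 1)) - v (y i)))"
    by (rule sum_subtractf)
  also have "(\<Sum>i=1..2 * s. ?B (i - 1) - ?B i) = ?B 0 - ?B (2 * s)"
    using sum_telescope''[of 0 "2 * s" "\<lambda>j. - ?B j"] by simp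
  also have "?B 0 - ?B (2 * s) = 0"
    using assms(2,7) y_period by (simp add: periodic2pi_def)
  finally show ?thesis
    by simp
qed

text \<open>The second derivative of the extremal function: a triangle over the arcs \<open>1\<close> and \<open>2\<close>
  with its peak at \<open>y 1\<close>, extended by zero and periodically.  Being affine on every arc, it is
  both convex and concave there, so the sign pattern of \<open>\<Delta>\<^sup>(\<^sup>q\<^sup>)\<close> holds for either sign.\<close>

definition tent :: "real \<Rightarrow> real" where
  "tent t = max 0 (min ((y 0 - y 1) * (t - y 2)) ((y 1 - y 2) * (y 0 - t))) / 4"

definition tent_slope :: "nat \<Rightarrow> real" where
  "tent_slope i = (if i = 1 then - (y 1 - y 2) / 4 else if i = 2 then (y 0 - y 1) / 4 else 0)"

definition tent_wave :: "real \<Rightarrow> real" where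
  "tent_wave x = periodic_extension (y (2 * s)) tent x - integral {y (2 * s)..y 0} tent / (2 * pi)"

lemma arcs_1_2: "0 < y 0 - y 1" "0 < y 1 - y 2" "y 0 - y 2 \<le> 2 * pi" "y (2 * s) \<le> y 2"
  using y_strict[of 0 1] y_strict[of 1 2] y_antimono[of 2 "2 * s"] s_pos y_period by auto

lemma tent_lipschitz: "2-lipschitz_on UNIV tent"
proof (rule lipschitz_onI)
  fix t t' :: real
  let ?A = "\<lambda>t. (y 0 - y 1) * (t - y 2)" and ?B = "\<lambda>t. (y 1 - y 2) * (y 0 - t)"
  have "?A t - ?A t' = (y 0 - y 1) * (t - t')" "?B t - ?B t' = (y 1 - y 2) * (t' - t)"
    by (simp_all add: algebra_simps)
  moreover have "(y 0 - y 1) * \<bar>t - t'\<bar> \<le> 2 * pi * \<bar>t - t'\<bar>" "(y 1 - y 2) * \<bar>t - t'\<bar> \<le> 2 * pi * \<bar>t - t'\<bar>"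
    using arcs_1_2 by (intro mult_right_mono; simp)+
  ultimately have "\<bar>?A t - ?A t'\<bar> \<le> 2 * pi * \<bar>t - t'\<bar>" "\<bar>?B t - ?B t'\<bar> \<le> 2 * pi * \<bar>t - t'\<bar>"
    using arcs_1_2 by (simp_all add: abs_mult abs_minus_commute)
  then have "max \<bar>?A t - ?A t'\<bar> \<bar>?B t - ?B t'\<bar> \<le> 2 * pi * \<bar>t - t'\<bar>"
    by simp
  then have "\<bar>max 0 (min (?A t) (?B t)) - max 0 (min (?A t') (?B t'))\<bar> \<le> 2 * pi * \<bar>t - t'\<bar>"
    by (rule order.trans[OF abs_max_min_diff_le])
  then have "\<bar>tent t - tent t'\<bar> \<le> 2 * pi * \<bar>t - t'\<bar> / 4"
    by (simp add: tent_def flip: diff_divide_distrib)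
  also have "\<dots> \<le> 2 * \<bar>t - t'\<bar>"
    using pi_less_4 by (simp add: mult_right_mono)
  finally show "dist (tent t) (tent t') \<le> 2 * dist t t'"
    by (simp add: dist_real_def)
qed simp

lemma tent_on_arc_1: "y 1 \<le> t \<Longrightarrow> t \<le> y 0 \<Longrightarrow> tent t = (y 1 - y 2) * (y 0 - t) / 4"
proof -
  assume t: "y 1 \<le> t" "t \<le> y 0"
  then have "(y 1 - y 2) * (y 0 - t) \<le> (y 1 - y 2) * (y 0 - y 1)"
    "(y 0 - y 1) * (y 1 - y 2) \<le> (y 0 - y 1) * (t - y 2)"
    using arcs_1_2 by (auto intro!: mult_left_mono)
  then have "(y 1 - y 2) * (y 0 - t) \<le> (y 0 - y 1) * (t - y 2)"
    by (simp add: mult.commute)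
  with t arcs_1_2 show ?thesis
    by (simp add: tent_def min_absorb2 max_absorb2)
qed

lemma tent_on_arc_2: "y 2 \<le> t \<Longrightarrow> t \<le> y 1 \<Longrightarrow> tent t = (y 0 - y 1) * (t - y 2) / 4"
proof -
  assume t: "y 2 \<le> t" "t \<le> y 1"
  then have "(y 0 - y 1) * (t - y 2) \<le> (y 0 - y 1) * (y 1 - y 2)"
    "(y 1 - y 2) * (y 0 - y 1) \<le> (y 1 - y 2) * (y 0 - t)"
    using arcs_1_2 by (auto intro!: mult_left_mono)
  then have "(y 0 - y 1) * (t - y 2) \<le> (y 1 - y 2) * (y 0 - t)"
    by (simp add: mult.commute)
  with t arcs_1_2 show ?thesis
    by (simp add: tent_def min_absorb1 max_absorb2)
qed

lemma tent_below_arc_2: "t \<le> y 2 \<Longrightarrow> tent t = 0"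
proof -
  assume "t \<le> y 2"
  then have "min ((y 0 - y 1) * (t - y 2)) ((y 1 - y 2) * (y 0 - t)) \<le> 0"
    using arcs_1_2 by (intro min.coboundedI1 mult_nonneg_nonpos) auto
  then show ?thesis
    by (simp add: tent_def max_absorb1)
qed

lemma tent_period_ends: "tent (y (2 * s)) = 0" "tent (y 0) = 0"
  using tent_below_arc_2[of "y (2 * s)"] tent_on_arc_1[of "y 0"] arcs_1_2 by simp_all

lemma tent_affine_on_arc:
  assumes "1 \<le> i" "i \<le> 2 * s" "y i \<le> x" "x \<le> y (i - 1)"
  shows "tent x = tent (y i) + tent_slope i * (x - y i)"
proof -
  consider "i = 1" | "i = 2" | "i \<ge> 3"
    using assms(1) by linarith
  then show ?thesis
  proof cases
    case 1
    with assms show ?thesis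
      using y_strict[of 0 1] s_pos by (simp add: tent_on_arc_1 tent_slope_def field_simps)
  next
    case 2
    with assms show ?thesis
      by (simp add: tent_on_arc_2 tent_slope_def field_simps)
  next
    case 3
    then have "y (i - 1) \<le> y 2"
      using assms by (intro y_antimono) auto
    with 3 assms y_antimono[of "i - 1" i] show ?thesis
      by (simp add: tent_below_arc_2 tent_slope_def)
  qed
qed

lemma abs_tent_slope_le: "\<bar>tent_slope i\<bar> \<le> 2"
  using arcs_1_2 pi_less_4 by (simp add: tent_slope_def)

lemma tent_wave_eq:
  assumes "y (2 * s) \<le> x" "x \<le> y 0"
  shows "tent_wave x = tent x - integral {y (2 * s)..y 0} tent / (2 * pi)"
proof -
  have "periodic_extension (y (2 * s)) tent x = tent (x - 2 * pi * of_int 0)"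
    using assms tent_period_ends y_period by (intro periodic_extension_eq) auto
  then show ?thesis
    by (simp add: tent_wave_def)
qed

lemma tent_wave_affine_on_arc:
  assumes "1 \<le> i" "i \<le> 2 * s" "y i \<le> x" "x \<le> y (i - 1)"
  shows "tent_wave x = tent_wave (y i) + tent_slope i * (x - y i)"
proof -
  have "y (2 * s) \<le> y i" "y (i - 1) \<le> y 0"
    using assms by (auto intro: y_antimono)
  then show ?thesis
    using assms tent_affine_on_arc[OF assms] by (simp add: tent_wave_eq)
qed

lemma tent_wave_lipschitz: "2-lipschitz_on UNIV tent_wave"
proof -
  have "2-lipschitz_on UNIV (periodic_extension (y (2 * s)) tent)"
  proof (rule lipschitz_on_periodic_extension)
    show "tent (y (2 * s) + 2 * pi) = tent (y (2 * s))"
      using tent_period_ends y_period by simp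
  qed (rule lipschitz_on_subset[OF tent_lipschitz], simp)
  then show ?thesis
    unfolding tent_wave_def lipschitz_on_def by (simp add: dist_real_def)
qed

lemma continuous_on_tent_wave: "continuous_on UNIV tent_wave"
  using tent_wave_lipschitz by (rule lipschitz_on_continuous_on)

lemma periodic2pi_tent_wave: "periodic2pi tent_wave"
  using periodic2pi_periodic_extension[of "y (2 * s)" tent] by (simp add: periodic2pi_def tent_wave_def)

lemma tent_wave_mean_zero: "integral {y (2 * s)..y (2 * s) + 2 * pi} tent_wave = 0"
proof -
  have "continuous_on UNIV tent"
    using tent_lipschitz by (rule lipschitz_on_continuous_on)
  then have "tent integrable_on {y (2 * s)..y 0}"
    by (rule integrable_continuous_interval[OF continuous_on_subset]) simp
  moreover have "integral {y (2 * s)..y 0} tent_wave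
      = integral {y (2 * s)..y 0} (\<lambda>x. tent x - integral {y (2 * s)..y 0} tent / (2 * pi))"
    by (rule integral_cong) (simp add: tent_wave_eq)
  moreover have "integral {y (2 * s)..y 0} (\<lambda>x. tent x - integral {y (2 * s)..y 0} tent / (2 * pi))
      = integral {y (2 * s)..y 0} tent - integral {y (2 * s)..y 0} (\<lambda>x. integral {y (2 * s)..y 0} tent / (2 * pi))"
    using calculation(1) by (rule integral_diff) (intro integrable_continuous_interval continuous_intros)
  ultimately show ?thesis
    using y_period by simp
qed

lemma chain_in_Delta_q:
  assumes "q \<ge> 2" "periodic_deriv_chain (q - 2) G" "G (q - 2) = tent_wave"
  shows "G 0 \<in> Delta_q q s y"
  unfolding Delta_q_def
proof (intro CollectI conjI allI impI)
  show cont: "continuous_on UNIV (G 0)" and "periodic2pi (G 0)"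
    using assms(2) by (auto simp: periodic_deriv_chain_def)
  fix i
  assume i: "1 \<le> i \<and> i \<le> 2 * s"
  let ?c = "(-1) ^ (i - 1) :: real"
  show "q_monotone q (\<lambda>x. ?c * G 0 x) (y i) (y (i - 1))"
    unfolding q_monotone_def
  proof (intro conjI exI[of _ "\<lambda>j x. ?c * G j x"])
    show "continuous_on {y i..y (i - 1)} (\<lambda>x. ?c * G 0 x)"
      by (intro continuous_intros continuous_on_subset[OF cont]) auto
    show "deriv_chain (q - 2) (\<lambda>j x. ?c * G j x) (\<lambda>x. ?c * G 0 x) {y i<..<y (i - 1)}"
      using assms(2) by (auto simp: deriv_chain_def periodic_deriv_chain_def intro: DERIV_cmult)
    show "\<forall>j\<le>q - 2. continuous_on {y i<..<y (i - 1)} (\<lambda>x. ?c * G j x)"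
      using assms(2) by (auto simp: periodic_deriv_chain_def intro!: continuous_intros
          intro: continuous_on_subset)
    have "convex_on {y i<..<y (i - 1)} (\<lambda>x. (?c * tent_slope i) * x + ?c * (tent_wave (y i) - tent_slope i * y i))"
      by (rule convex_on_affine) simp
    moreover have "?c * tent_wave x = (?c * tent_slope i) * x + ?c * (tent_wave (y i) - tent_slope i * y i)"
      if "x \<in> {y i<..<y (i - 1)}" for x
    proof -
      have affine: "tent_wave x = tent_wave (y i) + tent_slope i * (x - y i)"
        using i that by (intro tent_wave_affine_on_arc) auto
      show ?thesis
        unfolding affine by (simp add: algebra_simps)
    qed
    ultimately show "convex_on {y i<..<y (i - 1)} (\<lambda>x. ?c * G (q - 2) x)"
      unfolding assms(3) convex_on_def by (metis (no_types, lifting) convexD)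
  qed
qed

lemma chain_in_W_class:
  assumes "q \<ge> 2" "periodic_deriv_chain (q - 2) G" "G (q - 2) = tent_wave"
  shows "G 0 \<in> W_class (q - 1)"
  unfolding W_class_def
proof (intro CollectI conjI exI[of _ G])
  have "q - 1 - 1 = q - 2"
    by simp
  then show "deriv_chain (q - 1 - 1) G (G 0) UNIV"
    using assms(2) by (simp add: deriv_chain_def periodic_deriv_chain_def)
  show "periodic2pi (G 0)"
    using assms(2) by (simp add: periodic_deriv_chain_def)
  show "loc_abs_cont (G (q - 1 - 1))"
    using lipschitz_imp_loc_abs_cont[OF tent_wave_lipschitz] assms(3) \<open>q - 1 - 1 = q - 2\<close> by simp
  show "AE x in lborel. \<exists>D. (G (q - 1 - 1) has_real_derivative D) (at x) \<and> \<bar>D\<bar> \<le> 2"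
    using ae_deriv_bound_affine_on_arcs[OF periodic2pi_tent_wave tent_wave_affine_on_arc abs_tent_slope_le]
      assms(3) \<open>q - 1 - 1 = q - 2\<close> by simp
qed

section \<open>The lower bound\<close>

lemma integral_tent_wave_mult_second_deriv:
  assumes "periodic2pi (trig_sum hs)"
  shows "integral {y (2 * s)..y 0} (\<lambda>x. tent_wave x * trig_sum ((trig_sum_deriv ^^ 2) hs) x)
           = - (\<Sum>i=1..2 * s. tent_slope i * (trig_sum hs (y (i - 1)) - trig_sum hs (y i)))"
proof (rule integral_affine_on_arcs_mult_second_deriv[OF continuous_on_tent_wave periodic2pi_tent_wave])
  show "periodic2pi (trig_sum (trig_sum_deriv hs))"
    using assms has_real_derivative_trig_sum by (rule periodic2pi_deriv)
qed (auto simp: numeral_2_eq_2 intro: tent_wave_affine_on_arc has_real_derivative_trig_sum continuous_on_trig_sum)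

lemma integral_tent_wave_sine_product:
  "integral {y (2 * s)..y 0} (\<lambda>x. tent_wave x * trig_sum ((trig_sum_deriv ^^ 2) sine_product_harmonics) x) = 0"
proof -
  have "sine_product (y (i - 1)) = 0" "sine_product (y i) = 0" if "i \<in> {1..2 * s}" for i
    using that by (auto intro: sine_product_node)
  then show ?thesis
    using integral_tent_wave_mult_second_deriv[of sine_product_harmonics] periodic2pi_sine_product
    by (simp add: trig_sum_sine_product_harmonics)
qed

definition test_harmonics :: harmonics where
  "test_harmonics = [(1, -1, - y 1)]"

lemma trig_sum_test_harmonics: "trig_sum test_harmonics x = - cos (x - y 1)"
  by (simp add: test_harmonics_def)

lemma int_freqs_test_harmonics: "int_freqs 1 test_harmonics"
  unfolding int_freqs_def test_harmonics_def by (auto intro: exI[of _ 1])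

definition kappa :: real where
  "kappa = (y 1 - y 2) * (1 - cos (y 0 - y 1)) / 4 + (y 0 - y 1) * (1 - cos (y 1 - y 2)) / 4"

lemma kappa_pos: "kappa > 0"
proof -
  have "1 - cos L > 0" if "0 < L" "L < 2 * pi" for L
  proof -
    have "sin (L / 2) > 0"
      using that by (intro sin_gt_zero) auto
    then show ?thesis
      using cos_double_sin[of "L / 2"] by simp
  qed
  then show ?thesis
    using arcs_1_2 unfolding kappa_def by (intro add_pos_pos divide_pos_pos mult_pos_pos) auto
qed

lemma integral_tent_wave_test:
  "integral {y (2 * s)..y 0} (\<lambda>x. tent_wave x * trig_sum ((trig_sum_deriv ^^ 2) test_harmonics) x) = kappa"
proof -
  have "(\<Sum>i=1..2 * s. tent_slope i * (trig_sum test_harmonics (y (i - 1)) - trig_sum test_harmonics (y i)))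
      = (\<Sum>i\<in>{1, 2}. tent_slope i * (trig_sum test_harmonics (y (i - 1)) - trig_sum test_harmonics (y i)))"
    using s_pos by (intro sum.mono_neutral_right) (auto simp: tent_slope_def)
  also have "\<dots> = - kappa"
    by (simp add: trig_sum_test_harmonics tent_slope_def kappa_def field_simps cos_minus[of "y 1 - y 2", simplified])
  finally show ?thesis
    using integral_tent_wave_mult_second_deriv periodic2pi_trig_sum[OF int_freqs_test_harmonics] by simp
qed

lemma integral_deriv_pow_mult_eq:
  assumes "q \<ge> 2" "periodic_deriv_chain (q - 2) G" "G (q - 2) = tent_wave"
    and "periodic2pi (trig_sum ts)" "periodic2pi (trig_sum ks)"
  shows "integral {y (2 * s)..y 0} (\<lambda>x. trig_sum ((trig_sum_deriv ^^ q) ts) x * trig_sum ks x)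
    = integral {y (2 * s)..y 0} (\<lambda>x. tent_wave x * trig_sum ((trig_sum_deriv ^^ 2) ks) x)
      + (-1) ^ q * integral {y (2 * s)..y 0} (\<lambda>x. (trig_sum ts x - G 0 x) * trig_sum ((trig_sum_deriv ^^ q) ks) x)"
proof -
  let ?J = "{y (2 * s)..y 0}" and ?v = "trig_sum ((trig_sum_deriv ^^ q) ks)"
  have J: "?J = {y (2 * s)..y (2 * s) + 2 * pi}"
    using y_period by simp
  have "continuous_on UNIV (G 0)"
    using assms(2) by (simp add: periodic_deriv_chain_def)
  then have int: "(\<lambda>x. u x * ?v x) integrable_on ?J" if "continuous_on UNIV u" for u
    using that by (intro integrable_continuous_interval continuous_on_subset[OF continuous_on_mult]
        continuous_on_trig_sum) auto
  have by_parts: "integral ?J (\<lambda>x. trig_sum ((trig_sum_deriv ^^ q) ts) x * trig_sum ks x)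
      = (-1) ^ q * integral ?J (\<lambda>x. trig_sum ts x * ?v x)"
    using integral_trig_sum_by_parts_pow[OF assms(4,5), of "y (2 * s)" q] unfolding J
    by (simp flip: power_add mult.assoc)
  have split: "integral ?J (\<lambda>x. trig_sum ts x * ?v x)
      = integral ?J (\<lambda>x. G 0 x * ?v x) + integral ?J (\<lambda>x. (trig_sum ts x - G 0 x) * ?v x)"
    using int[OF continuous_on_trig_sum] int[OF \<open>continuous_on UNIV (G 0)\<close>]
    by (simp add: left_diff_distrib integral_diff)
  have chain: "(-1) ^ q * integral ?J (\<lambda>x. G 0 x * ?v x)
      = integral ?J (\<lambda>x. tent_wave x * trig_sum ((trig_sum_deriv ^^ 2) ks) x)"
    using integral_chain_by_parts_pow[OF assms(1,2,5), of "y (2 * s)"] assms(3) unfolding J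
    by (simp flip: power_add)
  show ?thesis
    unfolding by_parts split using chain by (simp add: distrib_left)
qed

definition period_l1_deriv :: "nat \<Rightarrow> harmonics \<Rightarrow> real" where
  "period_l1_deriv q hs = integral {y (2 * s)..y 0} (\<lambda>x. \<bar>trig_sum ((trig_sum_deriv ^^ q) hs) x\<bar>)"

lemma period_l1_deriv_nonneg: "period_l1_deriv q hs \<ge> 0"
  unfolding period_l1_deriv_def
  by (intro integral_nonneg integrable_continuous_interval continuous_intros continuous_on_trig_sum) auto

lemma integral_deriv_pow_mult_error:
  assumes "q \<ge> 2" "periodic_deriv_chain (q - 2) G" "G (q - 2) = tent_wave"
    and "int_freqs n ts" "periodic2pi (trig_sum ks)"
  shows "\<bar>integral {y (2 * s)..y 0} (\<lambda>x. trig_sum ((trig_sum_deriv ^^ q) ts) x * trig_sum ks x)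
           - integral {y (2 * s)..y 0} (\<lambda>x. tent_wave x * trig_sum ((trig_sum_deriv ^^ 2) ks) x)\<bar>
         \<le> supnorm (\<lambda>x. G 0 x - trig_sum ts x) * period_l1_deriv q ks"
proof -
  have cont: "continuous_on UNIV (G 0)" and per: "periodic2pi (G 0)"
    using assms(2) by (auto simp: periodic_deriv_chain_def)
  have "\<bar>trig_sum ts x - G 0 x\<bar> \<le> supnorm (\<lambda>x. G 0 x - trig_sum ts x)" for x
    using abs_le_supnorm_periodic[of "\<lambda>x. G 0 x - trig_sum ts x" x] cont per periodic2pi_trig_sum[OF assms(4)]
    by (auto simp: periodic2pi_def abs_minus_commute intro!: continuous_intros continuous_on_trig_sum)
  then show ?thesis
    unfolding integral_deriv_pow_mult_eq[OF assms(1-3) periodic2pi_trig_sum[OF assms(4)] assms(5)]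
      period_l1_deriv_def
    using cont by (simp add: abs_mult, intro abs_integral_mult_le continuous_intros continuous_on_trig_sum)
qed

lemma mult_test_harmonics_le_abs: "a * trig_sum test_harmonics t \<le> \<bar>a\<bar>"
proof -
  have "\<bar>a * cos (t - y 1)\<bar> \<le> \<bar>a\<bar>"
    by (simp add: abs_mult mult_left_le)
  then show ?thesis
    by (simp add: trig_sum_test_harmonics)
qed

lemma integral_test_le_weighted:
  assumes "n \<ge> 1" "int_freqs n hs" "sign_alternating (trig_sum hs)"
  shows "integral {y (2 * s)..y 0} (\<lambda>x. trig_sum hs x * trig_sum test_harmonics x)
           \<le> 4 * real n / (sine_product_const * margin)
               * integral {y (2 * s)..y 0} (\<lambda>x. trig_sum hs x * sine_product x)"
proof -
  have "integral {y (2 * s)..y 0} (\<lambda>x. trig_sum hs x * trig_sum test_harmonics x)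
      \<le> integral {y (2 * s)..y 0} (\<lambda>x. \<bar>trig_sum hs x\<bar>)"
    using mult_test_harmonics_le_abs
    by (intro integral_le integrable_continuous_interval continuous_intros continuous_on_trig_sum)
  also have "\<dots> \<le> 4 * real n / (sine_product_const * margin)
      * integral {y (2 * s)..y 0} (\<lambda>x. trig_sum hs x * sine_product x)"
    by (rule integral_abs_le_weighted[OF assms])
  finally show ?thesis .
qed

definition approx_const :: "nat \<Rightarrow> real" where
  "approx_const q = kappa / (period_l1_deriv q test_harmonics
     + 4 * period_l1_deriv q sine_product_harmonics / (sine_product_const * margin) + 1)"

lemma approx_const_pos: "approx_const q > 0"
  unfolding approx_const_def
  using kappa_pos period_l1_deriv_nonneg sine_product_const_pos margin_bounds(1)
  by (intro divide_pos_pos add_nonneg_pos add_nonneg_nonneg) auto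

lemma approx_const_le:
  assumes "n \<ge> 1" "e \<ge> 0"
    and "kappa - e * period_l1_deriv q test_harmonics
           \<le> 4 * real n / (sine_product_const * margin) * (e * period_l1_deriv q sine_product_harmonics)"
  shows "approx_const q \<le> real n * e"
proof -
  define AP AG where "AP = period_l1_deriv q test_harmonics" and "AG = period_l1_deriv q sine_product_harmonics"
  define D where "D = AP + 4 * AG / (sine_product_const * margin) + 1"
  have "AP \<le> real n * AP"
    using assms(1) period_l1_deriv_nonneg[of q test_harmonics] by (simp add: AP_def mult_le_cancel_right1)
  then have "AP + real n * (4 * AG / (sine_product_const * margin)) \<le> real n * D"
    by (simp add: D_def algebra_simps)
  then have "e * (AP + real n * (4 * AG / (sine_product_const * margin))) \<le> e * (real n * D)"
    using assms(2) by (rule mult_left_mono)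
  then have "kappa \<le> (real n * e) * D"
    using assms(3) by (simp add: AP_def AG_def algebra_simps)
  moreover have "0 < D"
    using period_l1_deriv_nonneg sine_product_const_pos margin_bounds(1) unfolding D_def AP_def AG_def
    by (intro add_nonneg_pos add_nonneg_nonneg) auto
  ultimately show ?thesis
    unfolding approx_const_def D_def AP_def AG_def by (simp add: divide_le_eq)
qed

lemma approximation_lower_bound:
  assumes "q \<ge> 2" "periodic_deriv_chain (q - 2) G" "G (q - 2) = tent_wave"
    and "n \<ge> 1" "trig_poly n T" "T \<in> Delta_q q s y"
  shows "approx_const q \<le> real n * supnorm (\<lambda>x. G 0 x - T x)"
proof -
  let ?J = "{y (2 * s)..y 0}"
  obtain ts where ts: "int_freqs n ts" "T = trig_sum ts"
    using trig_poly_imp_trig_sum[OF assms(5)] by blast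
  let ?w = "trig_sum ((trig_sum_deriv ^^ q) ts)" and ?e = "supnorm (\<lambda>x. G 0 x - T x)"
  have w: "int_freqs n ((trig_sum_deriv ^^ q) ts)" "sign_alternating ?w"
    using ts assms(1,6) by (auto intro: int_freqs_trig_sum_deriv_pow sign_alternating_trig_sum_deriv)
  have weighted: "integral ?J (\<lambda>x. ?w x * sine_product x) \<le> ?e * period_l1_deriv q sine_product_harmonics"
    using integral_deriv_pow_mult_error[OF assms(1-3) ts(1), of sine_product_harmonics]
      integral_tent_wave_sine_product periodic2pi_sine_product ts(2)
    by (simp add: trig_sum_sine_product_harmonics)
  have "kappa - ?e * period_l1_deriv q test_harmonics \<le> integral ?J (\<lambda>x. ?w x * trig_sum test_harmonics x)"
    using integral_deriv_pow_mult_error[OF assms(1-3) ts(1) periodic2pi_trig_sum[OF int_freqs_test_harmonics]]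
      integral_tent_wave_test ts(2)
    by simp
  also have "\<dots> \<le> 4 * real n / (sine_product_const * margin) * integral ?J (\<lambda>x. ?w x * sine_product x)"
    by (rule integral_test_le_weighted[OF assms(4) w])
  also have "\<dots> \<le> 4 * real n / (sine_product_const * margin) * (?e * period_l1_deriv q sine_product_harmonics)"
    using weighted sine_product_const_pos margin_bounds(1) by (intro mult_left_mono) auto
  moreover have "0 \<le> ?e"
    using assms(2) periodic2pi_trig_sum[OF ts(1)] unfolding ts(2)
    by (intro supnorm_nonneg_periodic)
      (auto simp: periodic_deriv_chain_def periodic2pi_def intro!: continuous_intros continuous_on_trig_sum)
  ultimately show ?thesis
    using assms(4) by (intro approx_const_le) auto
qed

end

theorem theorem1p5:
  fixes q s :: nat and y :: "nat \<Rightarrow> real"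
  assumes "q \<ge> 3" and "s \<ge> 1"
    and "\<forall>i<2 * s. y (Suc i) < y i"
    and "y 0 = y (2 * s) + 2 * pi"
  shows "\<exists>f \<in> Delta_q q s y \<inter> W_class (q - 1). \<exists>C>0.
           \<forall>n::nat. n \<ge> 1 \<longrightarrow> real n * E_nq n q s y f \<ge> C"
proof -
  interpret circle_partition s y
    using assms(2-4) by unfold_locales
  have q: "q \<ge> 2"
    using assms(1) by simp
  obtain G where G: "G (q - 2) = tent_wave" "periodic_deriv_chain (q - 2) G"
    using periodic_primitive_chain[OF continuous_on_tent_wave periodic2pi_tent_wave tent_wave_mean_zero] by blast
  show ?thesis
  proof (intro bexI[of _ "G 0"] exI[of _ "approx_const q"] conjI allI impI)
    show "G 0 \<in> Delta_q q s y \<inter> W_class (q - 1)"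
      using chain_in_Delta_q[OF q G(2,1)] chain_in_W_class[OF q G(2,1)] by blast
    show "approx_const q > 0"
      by (rule approx_const_pos)
    show "approx_const q \<le> real n * E_nq n q s y (G 0)" if "n \<ge> 1" for n
      using that approximation_lower_bound[OF q G(2,1) that] by (rule E_nq_lower_bound)
  qed
qed

end
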